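(* Let $\Phi\in C^\infty(\mathbb{R}^d)$ be real-valued and $V\subset\mathbb{R}^d$ open, with $\mathcal{M}_k:=\sum_{2\leq|\alpha|\leq k}\sup_{\xi\in V}|D^\alpha_\xi\Phi(\xi)|$ for $k\geq2$ and $\mathcal{M}_1:=1$. Let $A=(A_1,\dots,A_d)$ with $A_i=\frac{\partial_i\Phi}{|\nabla\Phi|^2}$ on the set where $\nabla\Phi\neq0$, let $\mathcal{L}=A\cdot\nabla$ and let ${}^t\mathcal{L}$ be its transpose, ${}^t\mathcal{L}u=-\sum_{i=1}^d\partial_i(A_iu)$. Then for every $N\in\mathbb{N}$ one can write $$({}^t\mathcal{L})^N=\sum_{|\alpha|\leq N}c_{\alpha,N}\partial^\alpha$$ with smooth coefficients $c_{\alpha,N}$ on $\{\nabla\Phi\neq0\}$ such that, for all multi-indices $\alpha$ with $|\alpha|\le N$ and $\beta$, there is a non-decreasing function $\mathcal{F}:\mathbb{R}^+\to\mathbb{R}^+$ (depending only on $d,N,\alpha,\beta$) with, for all $\xi\in V$ with $\nabla\Phi(\xi)\neq0$, $$|\partial^\beta_\xi c_{\alpha,N}(\xi)|\leq\mathcal{F}(\mathcal{M}_{N-|\alpha|+|\beta|+1})\sum_{k=N}^{2N-|\alpha|+|\beta|}\frac{1}{|\nabla\Phi(\xi)|^k}.$$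
   Context: $\partial^\alpha$ denotes the partial derivative of multi-index $\alpha$; $\mathcal{M}_k$ is assumed finite for the relevant $k$. *)

theory Defs
  imports "HOL-Analysis.Analysis"
begin

text \<open>Functions on R^d are modelled as functions on real^'n (d = CARD('n)).
Partial derivative in direction of the i-th coordinate axis.\<close>

definition pd :: "'n::finite \<Rightarrow> (real^'n \<Rightarrow> real) \<Rightarrow> real^'n \<Rightarrow> real" where
  "pd i f x = deriv (\<lambda>t. f (x + t *\<^sub>R axis i 1)) 0"

fun pderivs :: "'n::finite list \<Rightarrow> (real^'n \<Rightarrow> real) \<Rightarrow> real^'n \<Rightarrow> real" where
  "pderivs [] f = f"
| "pderivs (i # is) f = pd i (pderivs is f)"

definition smooth_on :: "(real^'n::finite) set \<Rightarrow> (real^'n \<Rightarrow> real) \<Rightarrow> bool" where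
  "smooth_on S f \<longleftrightarrow>
     (\<forall>is. continuous_on S (pderivs is f) \<and>
       (\<forall>i. \<forall>x\<in>S. (\<lambda>t. pderivs is f (x + t *\<^sub>R axis i 1)) field_differentiable (at 0)))"

definition mlen :: "('n::finite \<Rightarrow> nat) \<Rightarrow> nat" where
  "mlen \<alpha> = (\<Sum>i\<in>UNIV. \<alpha> i)"

definition midx_list :: "('n::finite \<Rightarrow> nat) \<Rightarrow> 'n list" where
  "midx_list \<alpha> = (SOME l. \<forall>i. count_list l i = \<alpha> i)"

definition dpart :: "('n::finite \<Rightarrow> nat) \<Rightarrow> (real^'n \<Rightarrow> real) \<Rightarrow> real^'n \<Rightarrow> real" where
  "dpart \<alpha> f = pderivs (midx_list \<alpha>) f"

definition grad :: "(real^'n::finite \<Rightarrow> real) \<Rightarrow> real^'n \<Rightarrow> real^'n" where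
  "grad \<Phi> x = (\<chi> i. pd i \<Phi> x)"

definition Acoef :: "(real^'n::finite \<Rightarrow> real) \<Rightarrow> 'n \<Rightarrow> real^'n \<Rightarrow> real" where
  "Acoef \<Phi> i x = pd i \<Phi> x / (norm (grad \<Phi> x))\<^sup>2"

definition tL :: "(real^'n::finite \<Rightarrow> real) \<Rightarrow> (real^'n \<Rightarrow> real) \<Rightarrow> real^'n \<Rightarrow> real" where
  "tL \<Phi> u x = - (\<Sum>i\<in>UNIV. pd i (\<lambda>y. Acoef \<Phi> i y * u y) x)"

definition MM :: "(real^'n::finite \<Rightarrow> real) \<Rightarrow> (real^'n) set \<Rightarrow> nat \<Rightarrow> real" where
  "MM \<Phi> V k = (if k \<le> 1 then 1
     else (\<Sum>\<gamma>\<in>{\<gamma>::'n\<Rightarrow>nat. 2 \<le> mlen \<gamma> \<and> mlen \<gamma> \<le> k}. (SUP \<xi>\<in>V. \<bar>dpart \<gamma> \<Phi> \<xi>\<bar>)))"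

definition MM_finite :: "(real^'n::finite \<Rightarrow> real) \<Rightarrow> (real^'n) set \<Rightarrow> nat \<Rightarrow> bool" where
  "MM_finite \<Phi> V k = (\<forall>\<gamma>::'n\<Rightarrow>nat. 2 \<le> mlen \<gamma> \<and> mlen \<gamma> \<le> k \<longrightarrow>
       bdd_above ((\<lambda>\<xi>. \<bar>dpart \<gamma> \<Phi> \<xi>\<bar>) ` V))"

end

theory Submission
  imports Defs "HOL-Library.Multiset"
begin

text \<open>
  Expanding \<open>(\<^sup>t\<L>)\<^sup>N u\<close> by the product rule gives coefficients indexed by ordered lists of
  directions, which satisfy a simple recursion; by the symmetry of second derivatives they can be
  grouped by multi-index. For the estimates, call a family \<open>\<Phi> \<mapsto> f\<^sub>\<Phi>\<close> admissible with indices
  \<open>(s, a, b)\<close> if every derivative \<open>\<partial>\<^sup>l f\<^sub>\<Phi>\<close> is bounded by \<open>F(\<M>\<^bsub>s+|l|\<^esub>)\<close> times the sum of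
  \<open>|\<nabla>\<Phi>|\<^sup>-\<^sup>k\<close> over \<open>a \<le> k \<le> b + |l|\<close>, with \<open>F\<close> non-decreasing. Admissible families are closed
  under sums and products (the ranges of exponents add) and under differentiation (which shifts
  \<open>s\<close> and \<open>b\<close> by one). The first and second derivatives of \<open>\<Phi>\<close> and \<open>|\<nabla>\<Phi>|\<^sup>-\<^sup>2\<close> are admissible,
  hence so are the \<open>A\<^sub>i\<close> and, by induction on \<open>N\<close>, the coefficients of \<open>(\<^sup>t\<L>)\<^sup>N\<close>, with indices
  \<open>(N - |\<alpha>| + 1, N, 2N - |\<alpha>|)\<close>.
\<close>

definition pd_differentiable :: "(real^'n::finite \<Rightarrow> real) \<Rightarrow> real^'n \<Rightarrow> 'n \<Rightarrow> bool" where
  "pd_differentiable f x i \<longleftrightarrow> (\<lambda>t. f (x + t *\<^sub>R axis i 1)) field_differentiable (at 0)"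

lemma has_field_derivative_pd:
  "pd_differentiable f x i \<Longrightarrow> ((\<lambda>t. f (x + t *\<^sub>R axis i 1)) has_field_derivative pd i f x) (at 0)"
  unfolding pd_differentiable_def pd_def by (simp add: DERIV_deriv_iff_field_differentiable)

lemma pd_eq_line_derivative:
  "((\<lambda>t. f (x + t *\<^sub>R axis i 1)) has_field_derivative D) (at 0) \<Longrightarrow> pd i f x = D \<and> pd_differentiable f x i"
  unfolding pd_differentiable_def pd_def by (auto simp: DERIV_imp_deriv field_differentiable_def)

lemma eventually_line_in_open:
  fixes x v :: "'a::real_normed_vector"
  assumes "open S" "x \<in> S"
  shows "eventually (\<lambda>t::real. x + t *\<^sub>R v \<in> S) (nhds 0)"
proof -
  have "continuous (at 0) (\<lambda>t::real. x + t *\<^sub>R v)" by (intro continuous_intros)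
  hence "((\<lambda>t::real. x + t *\<^sub>R v) \<longlongrightarrow> x) (at 0)" by (simp add: continuous_at)
  hence "eventually (\<lambda>t. x + t *\<^sub>R v \<in> S) (at 0)"
    using assms topological_tendstoD by blast
  thus ?thesis using assms(2) unfolding eventually_at_filter
    by (elim eventually_mono) auto
qed

lemma pd_cong_open:
  assumes "open S" "x \<in> S" "\<And>y. y \<in> S \<Longrightarrow> f y = g y"
  shows "pd i f x = pd i g x"
  unfolding pd_def
  by (rule deriv_cong_ev) (use eventually_line_in_open[OF assms(1,2), of "axis i 1"] assms(3) in \<open>auto elim: eventually_mono\<close>)

lemma pd_differentiable_cong_open:
  assumes "open S" "x \<in> S" "\<And>y. y \<in> S \<Longrightarrow> f y = g y" "pd_differentiable f x i"
  shows "pd_differentiable g x i"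
proof -
  have ev: "eventually (\<lambda>t. f (x + t *\<^sub>R axis i 1) = g (x + t *\<^sub>R axis i 1)) (nhds 0)"
    using eventually_line_in_open[OF assms(1,2), of "axis i 1"] assms(3) by (auto elim: eventually_mono)
  from assms(4) obtain D where "((\<lambda>t. f (x + t *\<^sub>R axis i 1)) has_field_derivative D) (at 0)"
    unfolding pd_differentiable_def field_differentiable_def by blast
  hence "((\<lambda>t. g (x + t *\<^sub>R axis i 1)) has_field_derivative D) (at 0)"
    using DERIV_cong_ev[OF refl ev refl] by simp
  thus ?thesis unfolding pd_differentiable_def field_differentiable_def by blast
qed

lemma pd_const: "pd i (\<lambda>y. c) x = 0"
  using pd_eq_line_derivative[of "\<lambda>y. c" x i 0] by simp

lemma pd_differentiable_const: "pd_differentiable (\<lambda>y. c) x i"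
  using pd_eq_line_derivative[of "\<lambda>y. c" x i 0] by simp

lemma pd_add:
  assumes "pd_differentiable f x i" "pd_differentiable g x i"
  shows "pd i (\<lambda>y. f y + g y) x = pd i f x + pd i g x \<and> pd_differentiable (\<lambda>y. f y + g y) x i"
  by (rule pd_eq_line_derivative) (intro derivative_intros has_field_derivative_pd assms)

lemma pd_diff:
  assumes "pd_differentiable f x i" "pd_differentiable g x i"
  shows "pd i (\<lambda>y. f y - g y) x = pd i f x - pd i g x \<and> pd_differentiable (\<lambda>y. f y - g y) x i"
  by (rule pd_eq_line_derivative) (intro derivative_intros has_field_derivative_pd assms)

lemma pd_uminus:
  assumes "pd_differentiable f x i"
  shows "pd i (\<lambda>y. - f y) x = - pd i f x \<and> pd_differentiable (\<lambda>y. - f y) x i"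
  by (rule pd_eq_line_derivative) (intro derivative_intros has_field_derivative_pd assms)

lemma pd_mult:
  assumes "pd_differentiable f x i" "pd_differentiable g x i"
  shows "pd i (\<lambda>y. f y * g y) x = pd i f x * g x + f x * pd i g x \<and> pd_differentiable (\<lambda>y. f y * g y) x i"
proof -
  have "((\<lambda>t. f (x + t *\<^sub>R axis i 1) * g (x + t *\<^sub>R axis i 1)) has_field_derivative
     pd i f x * g x + f x * pd i g x) (at 0)"
    using DERIV_mult[OF has_field_derivative_pd[OF assms(1)] has_field_derivative_pd[OF assms(2)]] by (simp add: mult.commute)
  thus ?thesis by (intro pd_eq_line_derivative) simp
qed

lemma pd_inverse:
  assumes "pd_differentiable f x i" "f x \<noteq> 0"
  shows "pd i (\<lambda>y. inverse (f y)) x = - (pd i f x * (inverse (f x) * inverse (f x)))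
     \<and> pd_differentiable (\<lambda>y. inverse (f y)) x i"
proof -
  have "((\<lambda>t. inverse (f (x + t *\<^sub>R axis i 1))) has_field_derivative
     - (pd i f x * (inverse (f (x + 0 *\<^sub>R axis i 1)) * inverse (f (x + 0 *\<^sub>R axis i 1))))) (at 0)"
    using DERIV_inverse_fun[OF has_field_derivative_pd[OF assms(1)]] assms(2) by simp
  thus ?thesis by (intro pd_eq_line_derivative) simp
qed

lemma pd_sum:
  assumes "finite A" "\<And>a. a \<in> A \<Longrightarrow> pd_differentiable (f a) x i"
  shows "pd i (\<lambda>y. \<Sum>a\<in>A. f a y) x = (\<Sum>a\<in>A. pd i (f a) x) \<and> pd_differentiable (\<lambda>y. \<Sum>a\<in>A. f a y) x i"
  by (rule pd_eq_line_derivative) (intro DERIV_sum has_field_derivative_pd assms)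

definition axis_differentiable_on :: "(real^'n::finite) set \<Rightarrow> (real^'n \<Rightarrow> real) \<Rightarrow> bool" where
  "axis_differentiable_on S h \<longleftrightarrow> continuous_on S h \<and> (\<forall>i. \<forall>x\<in>S. pd_differentiable h x i)"

lemma smooth_on_iff_pderivs: "smooth_on S f \<longleftrightarrow> (\<forall>l. axis_differentiable_on S (pderivs l f))"
  unfolding smooth_on_def axis_differentiable_on_def pd_differentiable_def by simp

lemma pderivs_append: "pderivs (xs @ ys) f = pderivs xs (pderivs ys f)"
  by (induction xs) auto

lemma pderivs_cong_open:
  assumes "open S" "\<And>y. y \<in> S \<Longrightarrow> f y = g y" "x \<in> S"
  shows "pderivs l f x = pderivs l g x"
  using assms(3)
proof (induction l arbitrary: x)
  case Nil thus ?case using assms(2) by simp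
next
  case (Cons i l)
  thus ?case using pd_cong_open[OF assms(1) Cons.prems, of "pderivs l f" "pderivs l g" i] by simp
qed

lemma axis_differentiable_on_cong_open:
  assumes "open S" "\<And>y. y \<in> S \<Longrightarrow> f y = g y" "axis_differentiable_on S f"
  shows "axis_differentiable_on S g"
proof -
  have "continuous_on S f" using assms(3) unfolding axis_differentiable_on_def by blast
  hence "continuous_on S g" using continuous_on_cong[OF refl, of S f g] assms(2) by simp
  moreover have "pd_differentiable g x i" if "x \<in> S" for x i
    by (rule pd_differentiable_cong_open[OF assms(1) that, of f g]) (use assms that in \<open>auto simp: axis_differentiable_on_def\<close>)
  ultimately show ?thesis unfolding axis_differentiable_on_def by blast
qed

lemma smooth_on_cong_open:
  assumes "open S" "\<And>y. y \<in> S \<Longrightarrow> f y = g y" "smooth_on S f"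
  shows "smooth_on S g"
  unfolding smooth_on_iff_pderivs
proof (intro allI)
  fix l :: "'a list"
  have c: "axis_differentiable_on S (pderivs l f)" using assms(3) unfolding smooth_on_iff_pderivs by blast
  have eq: "\<And>y. y \<in> S \<Longrightarrow> pderivs l f y = pderivs l g y"
    by (rule pderivs_cong_open[OF assms(1,2)])
  from axis_differentiable_on_cong_open[of S "pderivs l f" "pderivs l g", OF assms(1) eq c] show "axis_differentiable_on S (pderivs l g)" .
qed

lemma smooth_on_pderivs: "smooth_on S f \<Longrightarrow> smooth_on S (pderivs l f)"
  unfolding smooth_on_iff_pderivs by (metis pderivs_append)

lemma smooth_on_pd: "smooth_on S f \<Longrightarrow> smooth_on S (pd i f)"
  using smooth_on_pderivs[of S f "[i]"] by simp

lemma smooth_on_axis_differentiable: "smooth_on S f \<Longrightarrow> axis_differentiable_on S f"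
  unfolding smooth_on_iff_pderivs by (metis pderivs.simps(1))

lemma smooth_on_pd_differentiable: "smooth_on S f \<Longrightarrow> x \<in> S \<Longrightarrow> pd_differentiable f x i"
  using smooth_on_axis_differentiable axis_differentiable_on_def by blast

lemma smooth_on_continuous_on: "smooth_on S f \<Longrightarrow> continuous_on S f"
  using smooth_on_axis_differentiable axis_differentiable_on_def by blast

lemma smooth_on_subset: "smooth_on S f \<Longrightarrow> T \<subseteq> S \<Longrightarrow> smooth_on T f"
  unfolding smooth_on_def by (meson continuous_on_subset subsetD)

lemma smooth_on_if_pd_closed:
  assumes "open S" "\<And>h. h \<in> K \<Longrightarrow> axis_differentiable_on S h"
    "\<And>h i. h \<in> K \<Longrightarrow> \<exists>h'\<in>K. \<forall>x\<in>S. pd i h x = h' x"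
    "h \<in> K"
  shows "smooth_on S h"
proof -
  have *: "\<forall>h\<in>K. \<exists>h'\<in>K. \<forall>x\<in>S. pderivs l h x = h' x" for l
  proof (induction l)
    case Nil thus ?case by auto
  next
    case (Cons i l)
    show ?case
    proof
      fix h assume "h \<in> K"
      then obtain h' where h': "h' \<in> K" "\<forall>x\<in>S. pderivs l h x = h' x" using Cons by blast
      then obtain h'' where h'': "h'' \<in> K" "\<forall>x\<in>S. pd i h' x = h'' x" using assms(3) by blast
      have "pderivs (i # l) h x = h'' x" if "x \<in> S" for x
      proof -
        have "pderivs (i # l) h x = pd i (pderivs l h) x" by simp
        also have "\<dots> = pd i h' x" by (rule pd_cong_open[OF assms(1) that]) (use h'(2) in blast)
        also have "\<dots> = h'' x" using h''(2) that by blast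
        finally show ?thesis .
      qed
      thus "\<exists>h'\<in>K. \<forall>x\<in>S. pderivs (i # l) h x = h' x" using h'' by blast
    qed
  qed
  show ?thesis unfolding smooth_on_iff_pderivs
  proof
    fix l
    obtain h' where "h' \<in> K" "\<forall>x\<in>S. pderivs l h x = h' x" using * assms(4) by blast
    thus "axis_differentiable_on S (pderivs l h)" using axis_differentiable_on_cong_open[OF assms(1), of h' "pderivs l h"] assms(2)[of h'] by metis
  qed
qed

text \<open>
  Closure of smooth functions under the field operations is proved through this auxiliary
  class: it is closed under \<open>pd\<close> up to equality on \<open>S\<close>, so all iterated derivatives of its
  members are continuous.
\<close>

inductive_set smooth_expr :: "(real^'n::finite) set \<Rightarrow> (real^'n \<Rightarrow> real) set" for S where
  smooth_expr_base: "smooth_on S f \<Longrightarrow> f \<in> smooth_expr S"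
| smooth_expr_add: "f \<in> smooth_expr S \<Longrightarrow> g \<in> smooth_expr S \<Longrightarrow> (\<lambda>x. f x + g x) \<in> smooth_expr S"
| smooth_expr_mult: "f \<in> smooth_expr S \<Longrightarrow> g \<in> smooth_expr S \<Longrightarrow> (\<lambda>x. f x * g x) \<in> smooth_expr S"
| smooth_expr_uminus: "f \<in> smooth_expr S \<Longrightarrow> (\<lambda>x. - f x) \<in> smooth_expr S"
| smooth_expr_inverse: "smooth_on S f \<Longrightarrow> (\<forall>x\<in>S. f x \<noteq> 0) \<Longrightarrow> (\<lambda>x. inverse (f x)) \<in> smooth_expr S"

lemma smooth_expr_axis_differentiable: "h \<in> smooth_expr S \<Longrightarrow> axis_differentiable_on S h"
proof (induction rule: smooth_expr.induct)
  case (smooth_expr_base f) thus ?case by (rule smooth_on_axis_differentiable)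
next
  case (smooth_expr_add f g)
  hence "continuous_on S f" "continuous_on S g" "\<forall>i. \<forall>x\<in>S. pd_differentiable f x i" "\<forall>i. \<forall>x\<in>S. pd_differentiable g x i"
    unfolding axis_differentiable_on_def by blast+
  thus ?case unfolding axis_differentiable_on_def using pd_add[THEN conjunct2] continuous_on_add by blast
next
  case (smooth_expr_mult f g)
  hence "continuous_on S f" "continuous_on S g" "\<forall>i. \<forall>x\<in>S. pd_differentiable f x i" "\<forall>i. \<forall>x\<in>S. pd_differentiable g x i"
    unfolding axis_differentiable_on_def by blast+
  thus ?case unfolding axis_differentiable_on_def using pd_mult[THEN conjunct2] continuous_on_mult by blast
next
  case (smooth_expr_uminus f)
  hence "continuous_on S f" "\<forall>i. \<forall>x\<in>S. pd_differentiable f x i"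
    unfolding axis_differentiable_on_def by blast+
  thus ?case unfolding axis_differentiable_on_def using pd_uminus[THEN conjunct2] continuous_on_minus by blast
next
  case (smooth_expr_inverse f)
  have "continuous_on S (\<lambda>x. inverse (f x))" using smooth_expr_inverse smooth_on_continuous_on by (auto intro!: continuous_intros)
  moreover have "pd_differentiable (\<lambda>x. inverse (f x)) x i" if "x \<in> S" for x i
    using pd_inverse[THEN conjunct2] smooth_on_pd_differentiable smooth_expr_inverse that by blast
  ultimately show ?case unfolding axis_differentiable_on_def by blast
qed

lemma smooth_expr_pd_differentiable: "h \<in> smooth_expr S \<Longrightarrow> x \<in> S \<Longrightarrow> pd_differentiable h x i"
  using smooth_expr_axis_differentiable axis_differentiable_on_def by blast

lemma smooth_expr_pd: "h \<in> smooth_expr S \<Longrightarrow> \<exists>h'\<in>smooth_expr S. \<forall>x\<in>S. pd i h x = h' x"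
proof (induction rule: smooth_expr.induct)
  case (smooth_expr_base f) thus ?case using smooth_on_pd smooth_expr.smooth_expr_base by blast
next
  case (smooth_expr_add f g)
  then obtain f' g' where "f' \<in> smooth_expr S" "g' \<in> smooth_expr S" "\<forall>x\<in>S. pd i f x = f' x" "\<forall>x\<in>S. pd i g x = g' x"
    by blast
  moreover have "\<forall>x\<in>S. pd i (\<lambda>a. f a + g a) x = pd i f x + pd i g x"
    using pd_add smooth_expr_pd_differentiable smooth_expr_add.hyps by blast
  ultimately show ?case by (intro bexI[of _ "\<lambda>x. f' x + g' x"] smooth_expr.smooth_expr_add) auto
next
  case (smooth_expr_mult f g)
  then obtain f' g' where "f' \<in> smooth_expr S" "g' \<in> smooth_expr S" "\<forall>x\<in>S. pd i f x = f' x" "\<forall>x\<in>S. pd i g x = g' x"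
    by blast
  moreover have "\<forall>x\<in>S. pd i (\<lambda>a. f a * g a) x = pd i f x * g x + f x * pd i g x"
    using pd_mult smooth_expr_pd_differentiable smooth_expr_mult.hyps by blast
  ultimately show ?case
    using smooth_expr_mult.hyps
    by (intro bexI[of _ "\<lambda>x. f' x * g x + f x * g' x"] smooth_expr.smooth_expr_add smooth_expr.smooth_expr_mult) auto
next
  case (smooth_expr_uminus f)
  then obtain f' where "f' \<in> smooth_expr S" "\<forall>x\<in>S. pd i f x = f' x" by blast
  moreover have "\<forall>x\<in>S. pd i (\<lambda>a. - f a) x = - pd i f x"
    using pd_uminus smooth_expr_pd_differentiable smooth_expr_uminus.hyps by blast
  ultimately show ?case by (intro bexI[of _ "\<lambda>x. - f' x"] smooth_expr.smooth_expr_uminus) auto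
next
  case (smooth_expr_inverse f)
  have "(\<lambda>x. - (pd i f x * (inverse (f x) * inverse (f x)))) \<in> smooth_expr S"
    by (intro smooth_expr.smooth_expr_uminus smooth_expr.smooth_expr_mult smooth_expr.smooth_expr_base
        smooth_on_pd smooth_expr.smooth_expr_inverse smooth_expr_inverse.hyps)
  moreover have "\<forall>x\<in>S. pd i (\<lambda>a. inverse (f a)) x = - (pd i f x * (inverse (f x) * inverse (f x)))"
    using pd_inverse[THEN conjunct1] smooth_expr_inverse smooth_on_pd_differentiable by blast
  ultimately show ?case by (intro bexI[of _ "\<lambda>x. - (pd i f x * (inverse (f x) * inverse (f x)))"]) simp_all
qed

lemma smooth_on_smooth_expr: "open S \<Longrightarrow> h \<in> smooth_expr S \<Longrightarrow> smooth_on S h"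
  by (rule smooth_on_if_pd_closed[where K="smooth_expr S"]) (auto intro: smooth_expr_axis_differentiable smooth_expr_pd)

lemma smooth_on_add: "open S \<Longrightarrow> smooth_on S f \<Longrightarrow> smooth_on S g \<Longrightarrow> smooth_on S (\<lambda>x. f x + g x)"
  by (rule smooth_on_smooth_expr) (auto intro: smooth_expr_add smooth_expr_base)

lemma smooth_on_mult: "open S \<Longrightarrow> smooth_on S f \<Longrightarrow> smooth_on S g \<Longrightarrow> smooth_on S (\<lambda>x. f x * g x)"
  by (rule smooth_on_smooth_expr) (auto intro: smooth_expr_mult smooth_expr_base)

lemma smooth_on_uminus: "open S \<Longrightarrow> smooth_on S f \<Longrightarrow> smooth_on S (\<lambda>x. - f x)"
  by (rule smooth_on_smooth_expr) (auto intro: smooth_expr_uminus smooth_expr_base)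

lemma smooth_on_inverse: "open S \<Longrightarrow> smooth_on S f \<Longrightarrow> \<forall>x\<in>S. f x \<noteq> 0 \<Longrightarrow> smooth_on S (\<lambda>x. inverse (f x))"
  by (rule smooth_on_smooth_expr) (auto intro: smooth_expr_inverse)

lemma pderivs_const: "pderivs l (\<lambda>x. c) = (if l = [] then (\<lambda>x. c) else (\<lambda>x. 0))"
proof (induction l)
  case (Cons i l) thus ?case by (auto simp: pd_const[abs_def])
qed simp

lemma smooth_on_const: "smooth_on S (\<lambda>x. c)"
  unfolding smooth_on_def
  by (metis continuous_on_const pd_differentiable_const pd_differentiable_def pderivs_const)

lemma smooth_on_sum:
  assumes "open S" "finite A" "\<And>a. a \<in> A \<Longrightarrow> smooth_on S (f a)"
  shows "smooth_on S (\<lambda>x. \<Sum>a\<in>A. f a x)"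
  using assms(2,3)
proof (induction A rule: finite_induct)
  case empty thus ?case using smooth_on_const[of S 0] by simp
next
  case (insert a A)
  thus ?case using smooth_on_add[OF assms(1), of "f a" "\<lambda>x. \<Sum>a\<in>A. f a x"] by simp
qed

section \<open>Symmetry of second derivatives\<close>

lemma has_field_derivative_along_axis:
  assumes "pd_differentiable f (x + a *\<^sub>R axis i 1) i"
  shows "((\<lambda>t. f (x + t *\<^sub>R axis i 1)) has_field_derivative pd i f (x + a *\<^sub>R axis i 1)) (at a)"
proof -
  have "((\<lambda>t. f ((x + a *\<^sub>R axis i 1) + t *\<^sub>R axis i 1)) has_field_derivative pd i f (x + a *\<^sub>R axis i 1)) (at 0)"
    by (rule has_field_derivative_pd[OF assms])
  moreover have "(\<lambda>t. f ((x + a *\<^sub>R axis i 1) + t *\<^sub>R axis i 1)) = (\<lambda>t. (\<lambda>t. f (x + t *\<^sub>R axis i 1)) (t + a))"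
    by (simp add: algebra_simps)
  ultimately have "((\<lambda>t. (\<lambda>t. f (x + t *\<^sub>R axis i 1)) (t + a)) has_field_derivative pd i f (x + a *\<^sub>R axis i 1)) (at 0)"
    by simp
  thus ?thesis using DERIV_shift[of "\<lambda>t. f (x + t *\<^sub>R axis i 1)" _ 0 a] by simp
qed

lemma mvt_along_axis:
  assumes "s > 0" "\<And>\<sigma>. 0 \<le> \<sigma> \<Longrightarrow> \<sigma> \<le> s \<Longrightarrow> pd_differentiable f (z + \<sigma> *\<^sub>R axis i 1) i"
  shows "\<exists>\<sigma>. 0 < \<sigma> \<and> \<sigma> < s \<and> f (z + s *\<^sub>R axis i 1) - f z = s * pd i f (z + \<sigma> *\<^sub>R axis i 1)"
proof -
  have "\<forall>t. 0 \<le> t \<and> t \<le> s \<longrightarrow> ((\<lambda>t. f (z + t *\<^sub>R axis i 1)) has_field_derivative pd i f (z + t *\<^sub>R axis i 1)) (at t)"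
    using has_field_derivative_along_axis assms(2) by blast
  thus ?thesis
    using MVT2[of 0 s "\<lambda>t. f (z + t *\<^sub>R axis i 1)" "\<lambda>t. pd i f (z + t *\<^sub>R axis i 1)"] assms(1)
    by auto
qed

lemma axis_line_shift: "(\<lambda>t. h (y + t *\<^sub>R e + w)) = (\<lambda>t. h ((y + w) + t *\<^sub>R (e::real^'n::finite)))"
  by (simp add: algebra_simps)

lemma pd_shift: "pd i (\<lambda>y. h (y + w)) y = pd i h (y + w)"
  unfolding pd_def by (simp add: axis_line_shift)

lemma pd_differentiable_shift: "pd_differentiable h (y + w) i \<Longrightarrow> pd_differentiable (\<lambda>y. h (y + w)) y i"
  unfolding pd_differentiable_def by (simp add: axis_line_shift)

lemma second_difference_mvt:
  assumes "open S" "smooth_on S h" "s > 0"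
    and box: "\<And>\<sigma> \<tau>. 0 \<le> \<sigma> \<Longrightarrow> \<sigma> \<le> s \<Longrightarrow> 0 \<le> \<tau> \<Longrightarrow> \<tau> \<le> s \<Longrightarrow> x + \<sigma> *\<^sub>R axis i 1 + \<tau> *\<^sub>R axis j 1 \<in> S"
  shows "\<exists>\<sigma> \<tau>. 0 < \<sigma> \<and> \<sigma> < s \<and> 0 < \<tau> \<and> \<tau> < s \<and>
     h (x + s *\<^sub>R axis i 1 + s *\<^sub>R axis j 1) - h (x + s *\<^sub>R axis i 1) - h (x + s *\<^sub>R axis j 1) + h x
       = s * s * pd j (pd i h) (x + \<sigma> *\<^sub>R axis i 1 + \<tau> *\<^sub>R axis j 1)"
proof -
  define ei :: "real^'a" where "ei = axis i 1"
  define ej :: "real^'a" where "ej = axis j 1"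
  define F where "F = (\<lambda>y. h (y + s *\<^sub>R ej) - h y)"
  have inS: "x + \<sigma> *\<^sub>R ei + \<tau> *\<^sub>R ej \<in> S" if "0 \<le> \<sigma>" "\<sigma> \<le> s" "0 \<le> \<tau>" "\<tau> \<le> s" for \<sigma> \<tau>
    using box that unfolding ei_def ej_def by blast
  have ldF: "pd_differentiable F (x + \<sigma> *\<^sub>R ei) i \<and>
      pd i F (x + \<sigma> *\<^sub>R ei) = pd i h (x + \<sigma> *\<^sub>R ei + s *\<^sub>R ej) - pd i h (x + \<sigma> *\<^sub>R ei)"
    if "0 \<le> \<sigma>" "\<sigma> \<le> s" for \<sigma>
  proof -
    have a: "x + \<sigma> *\<^sub>R ei + s *\<^sub>R ej \<in> S" using inS[of \<sigma> s] that assms(3) by simp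
    have b: "x + \<sigma> *\<^sub>R ei \<in> S" using inS[of \<sigma> 0] that assms(3) by simp
    have l1: "pd_differentiable (\<lambda>y. h (y + s *\<^sub>R ej)) (x + \<sigma> *\<^sub>R ei) i"
      by (rule pd_differentiable_shift) (use smooth_on_pd_differentiable[OF assms(2) a] in simp)
    have l2: "pd_differentiable h (x + \<sigma> *\<^sub>R ei) i" using smooth_on_pd_differentiable[OF assms(2) b] .
    show ?thesis using pd_diff[OF l1 l2] unfolding F_def by (simp add: pd_shift)
  qed
  obtain \<sigma> where \<sigma>: "0 < \<sigma>" "\<sigma> < s" "F (x + s *\<^sub>R ei) - F x = s * pd i F (x + \<sigma> *\<^sub>R ei)"
    using mvt_along_axis[OF assms(3), of F x i] ldF unfolding ei_def by blast
  have sm: "smooth_on S (pd i h)" using smooth_on_pd[OF assms(2)] .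
  obtain \<tau> where \<tau>: "0 < \<tau>" "\<tau> < s" "pd i h (x + \<sigma> *\<^sub>R ei + s *\<^sub>R ej) - pd i h (x + \<sigma> *\<^sub>R ei)
      = s * pd j (pd i h) (x + \<sigma> *\<^sub>R ei + \<tau> *\<^sub>R ej)"
  proof -
    have "\<exists>\<tau>. 0 < \<tau> \<and> \<tau> < s \<and> pd i h ((x + \<sigma> *\<^sub>R ei) + s *\<^sub>R axis j 1) - pd i h (x + \<sigma> *\<^sub>R ei)
      = s * pd j (pd i h) ((x + \<sigma> *\<^sub>R ei) + \<tau> *\<^sub>R axis j 1)"
      by (rule mvt_along_axis[OF assms(3)]) (use smooth_on_pd_differentiable[OF sm] inS \<sigma> in \<open>auto simp: ej_def\<close>)
    thus ?thesis using that unfolding ej_def by blast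
  qed
  have "h (x + s *\<^sub>R ei + s *\<^sub>R ej) - h (x + s *\<^sub>R ei) - h (x + s *\<^sub>R ej) + h x
      = F (x + s *\<^sub>R ei) - F x" unfolding F_def by (simp add: algebra_simps)
  also have "\<dots> = s * s * pd j (pd i h) (x + \<sigma> *\<^sub>R ei + \<tau> *\<^sub>R ej)"
    using \<sigma>(3) ldF[of \<sigma>] \<sigma>(1,2) \<tau>(3) by simp
  finally show ?thesis using \<sigma> \<tau> unfolding ei_def ej_def by blast
qed

lemma mixed_pd_agree_nearby:
  assumes "open S" "smooth_on S h" "x \<in> S" "e > 0"
  obtains y z where "dist y x < e" "dist z x < e" "pd j (pd i h) y = pd i (pd j h) z"
proof -
  obtain r where r: "r > 0" "ball x r \<subseteq> S" using assms(1,3) open_contains_ball by blast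
  define s where "s = min r e / 3"
  have s: "s > 0" using r assms(4) unfolding s_def by simp
  have near: "dist (x + \<sigma> *\<^sub>R axis k 1 + \<tau> *\<^sub>R axis l 1) x < min r e"
    if "0 \<le> \<sigma>" "\<sigma> \<le> s" "0 \<le> \<tau>" "\<tau> \<le> s" for \<sigma> \<tau> k l
  proof -
    have "dist (x + \<sigma> *\<^sub>R axis k 1 + \<tau> *\<^sub>R axis l 1) x = norm (\<sigma> *\<^sub>R axis k (1::real) + \<tau> *\<^sub>R axis l 1)"
      by (simp add: dist_norm)
    also have "\<dots> \<le> norm (\<sigma> *\<^sub>R axis k (1::real)) + norm (\<tau> *\<^sub>R axis l (1::real))"
      by (rule norm_triangle_ineq)
    also have "\<dots> = \<sigma> + \<tau>" using that by simp
    also have "\<dots> < min r e" using that s r assms(4) unfolding s_def by linarith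
    finally show ?thesis .
  qed
  have box: "x + \<sigma> *\<^sub>R axis k 1 + \<tau> *\<^sub>R axis l 1 \<in> S"
    if "0 \<le> \<sigma>" "\<sigma> \<le> s" "0 \<le> \<tau>" "\<tau> \<le> s" for \<sigma> \<tau> k l
    using near[OF that, of k l] r(2) by (auto simp: dist_commute)
  obtain \<sigma>1 \<tau>1 where 1: "0 < \<sigma>1" "\<sigma>1 < s" "0 < \<tau>1" "\<tau>1 < s"
     "h (x + s *\<^sub>R axis i 1 + s *\<^sub>R axis j 1) - h (x + s *\<^sub>R axis i 1) - h (x + s *\<^sub>R axis j 1) + h x
       = s * s * pd j (pd i h) (x + \<sigma>1 *\<^sub>R axis i 1 + \<tau>1 *\<^sub>R axis j 1)"
    using second_difference_mvt[OF assms(1,2) s, of x i j] box by blast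
  obtain \<sigma>2 \<tau>2 where 2: "0 < \<sigma>2" "\<sigma>2 < s" "0 < \<tau>2" "\<tau>2 < s"
     "h (x + s *\<^sub>R axis j 1 + s *\<^sub>R axis i 1) - h (x + s *\<^sub>R axis j 1) - h (x + s *\<^sub>R axis i 1) + h x
       = s * s * pd i (pd j h) (x + \<sigma>2 *\<^sub>R axis j 1 + \<tau>2 *\<^sub>R axis i 1)"
    using second_difference_mvt[OF assms(1,2) s, of x j i] box by blast
  have "s * s * pd j (pd i h) (x + \<sigma>1 *\<^sub>R axis i 1 + \<tau>1 *\<^sub>R axis j 1)
      = s * s * pd i (pd j h) (x + \<sigma>2 *\<^sub>R axis j 1 + \<tau>2 *\<^sub>R axis i 1)"
    using 1(5) 2(5) by (simp add: algebra_simps)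
  with s have "pd j (pd i h) (x + \<sigma>1 *\<^sub>R axis i 1 + \<tau>1 *\<^sub>R axis j 1)
      = pd i (pd j h) (x + \<sigma>2 *\<^sub>R axis j 1 + \<tau>2 *\<^sub>R axis i 1)"
    by simp
  moreover have "dist (x + \<sigma>1 *\<^sub>R axis i 1 + \<tau>1 *\<^sub>R axis j 1) x < e"
    "dist (x + \<sigma>2 *\<^sub>R axis j 1 + \<tau>2 *\<^sub>R axis i 1) x < e"
    using near[of \<sigma>1 \<tau>1 i j] near[of \<sigma>2 \<tau>2 j i] 1 2 by auto
  ultimately show ?thesis using that by blast
qed

lemma pd_commute:
  assumes "open S" "smooth_on S h" "x \<in> S"
  shows "pd i (pd j h) x = pd j (pd i h) x"
proof (rule ccontr)
  define a b where "a = pd i (pd j h)" and "b = pd j (pd i h)"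
  assume "pd i (pd j h) x \<noteq> pd j (pd i h) x"
  then have d: "\<bar>a x - b x\<bar> / 2 > 0" unfolding a_def b_def by simp
  have "continuous_on S a" "continuous_on S b"
    unfolding a_def b_def by (intro smooth_on_continuous_on smooth_on_pd assms(2))+
  then have "isCont a x" "isCont b x"
    using assms(1,3) continuous_on_eq_continuous_at by blast+
  then obtain ra rb where ra: "ra > 0" "\<And>y. dist y x < ra \<Longrightarrow> dist (a y) (a x) < \<bar>a x - b x\<bar> / 2"
    and rb: "rb > 0" "\<And>y. dist y x < rb \<Longrightarrow> dist (b y) (b x) < \<bar>a x - b x\<bar> / 2"
    using d unfolding continuous_at_eps_delta by blast
  obtain y z where "dist y x < min ra rb" "dist z x < min ra rb" "a y = b z"
    using mixed_pd_agree_nearby[OF assms, of "min ra rb" i j] ra(1) rb(1) unfolding a_def b_def by auto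
  then have "\<bar>b z - a x\<bar> < \<bar>a x - b x\<bar> / 2" "\<bar>b z - b x\<bar> < \<bar>a x - b x\<bar> / 2"
    using ra(2)[of y] rb(2)[of z] by (auto simp: dist_real_def)
  then show False by (auto simp: abs_if split: if_splits)
qed

lemma pd_pderivs_insert:
  assumes "open S" "smooth_on S f" "x \<in> S"
  shows "pd i (pderivs (ys @ zs) f) x = pderivs (ys @ i # zs) f x"
  using assms(3)
proof (induction ys arbitrary: x)
  case Nil thus ?case by simp
next
  case (Cons y ys)
  have sm: "smooth_on S (pderivs (ys @ zs) f)" by (rule smooth_on_pderivs[OF assms(2)])
  have "pd i (pderivs ((y # ys) @ zs) f) x = pd i (pd y (pderivs (ys @ zs) f)) x" by simp
  also have "\<dots> = pd y (pd i (pderivs (ys @ zs) f)) x" by (rule pd_commute[OF assms(1) sm Cons.prems])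
  also have "\<dots> = pd y (pderivs (ys @ i # zs) f) x"
    by (rule pd_cong_open[OF assms(1) Cons.prems]) (rule Cons.IH)
  finally show ?case by simp
qed

lemma pderivs_mset_cong:
  assumes "open S" "smooth_on S f" "mset l1 = mset l2" "x \<in> S"
  shows "pderivs l1 f x = pderivs l2 f x"
  using assms(3,4)
proof (induction l1 arbitrary: l2 x)
  case Nil thus ?case by simp
next
  case (Cons i r)
  have "i \<in> set l2" using Cons.prems(1) by (metis list.set_intros(1) mset_eq_setD)
  then obtain ys zs where l2: "l2 = ys @ i # zs" by (meson split_list)
  have m: "mset r = mset (ys @ zs)" using Cons.prems(1) l2 by simp
  have "pderivs (i # r) f x = pd i (pderivs r f) x" by simp
  also have "\<dots> = pd i (pderivs (ys @ zs) f) x"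
    by (rule pd_cong_open[OF assms(1) Cons.prems(2)]) (rule Cons.IH[OF m])
  also have "\<dots> = pderivs l2 f x" using pd_pderivs_insert[OF assms(1,2) Cons.prems(2)] l2 by simp
  finally show ?case .
qed

definition list_midx :: "'n::finite list \<Rightarrow> 'n \<Rightarrow> nat" where
  "list_midx l = (\<lambda>i. count_list l i)"

lemma count_list_midx_list: "count_list (midx_list \<alpha>) i = \<alpha> i"
proof -
  have fin: "finite {x. \<alpha> x > 0}" by simp
  obtain l where "mset l = Abs_multiset \<alpha>" using ex_mset by blast
  hence "\<forall>i. count_list l i = \<alpha> i"
  proof (intro allI)
    fix i assume l: "mset l = Abs_multiset \<alpha>"
    have "count_list l i = count (mset l) i" by (simp add: count_mset)
    also have "\<dots> = count (Abs_multiset \<alpha>) i" by (simp add: l)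
    also have "\<dots> = \<alpha> i" using count_Abs_multiset[OF fin] by simp
    finally show "count_list l i = \<alpha> i" .
  qed
  hence "\<exists>l. \<forall>i. count_list l i = \<alpha> i" by blast
  from someI_ex[OF this] have "\<forall>i. count_list (midx_list \<alpha>) i = \<alpha> i"
    unfolding midx_list_def .
  thus ?thesis by blast
qed

lemma list_midx_midx_list: "list_midx (midx_list \<alpha>) = \<alpha>"
  unfolding list_midx_def by (rule ext, rule count_list_midx_list)

lemma mset_eq_if_list_midx_eq: "list_midx l1 = list_midx l2 \<Longrightarrow> mset l1 = mset l2"
  unfolding list_midx_def by (metis count_mset multiset_eqI)

lemma pderivs_eq_dpart:
  assumes "open S" "smooth_on S f" "x \<in> S"
  shows "pderivs l f x = dpart (list_midx l) f x"
  unfolding dpart_def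
  by (rule pderivs_mset_cong[OF assms(1,2) _ assms(3)]) (rule mset_eq_if_list_midx_eq, simp add: list_midx_midx_list)

lemma mlen_list_midx: "mlen (list_midx l) = length l"
proof (induction l)
  case Nil thus ?case by (simp add: mlen_def list_midx_def)
next
  case (Cons a l)
  have "mlen (list_midx (a # l)) = (\<Sum>i\<in>UNIV. (if a = i then 1 else 0) + count_list l i)"
    unfolding mlen_def list_midx_def by (rule sum.cong) auto
  also have "\<dots> = (\<Sum>i\<in>UNIV. (if a = i then 1 else 0::nat)) + mlen (list_midx l)"
    by (simp add: sum.distrib mlen_def list_midx_def)
  also have "\<dots> = 1 + length l" using Cons by simp
  finally show ?case by simp
qed

lemma length_midx_list: "length (midx_list \<alpha>) = mlen \<alpha>"
  using mlen_list_midx[of "midx_list \<alpha>"] unfolding list_midx_midx_list by simp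

definition lists_upto :: "nat \<Rightarrow> 'n::finite list set" where
  "lists_upto N = {l. length l \<le> N}"

lemma finite_lists_upto: "finite (lists_upto N :: 'n::finite list set)"
  using finite_lists_length_le[of "UNIV::'n set" N] unfolding lists_upto_def by simp

lemma midx_le_eq_image: "{\<alpha>::'n::finite \<Rightarrow> nat. mlen \<alpha> \<le> N} = list_midx ` lists_upto N"
proof
  show "{\<alpha>::'n \<Rightarrow> nat. mlen \<alpha> \<le> N} \<subseteq> list_midx ` lists_upto N"
  proof (rule subsetI)
    fix \<alpha> assume "\<alpha> \<in> {\<alpha>::'n \<Rightarrow> nat. mlen \<alpha> \<le> N}"
    hence "midx_list \<alpha> \<in> lists_upto N" by (simp add: lists_upto_def length_midx_list)
    thus "\<alpha> \<in> list_midx ` lists_upto N" by (rule rev_image_eqI) (simp add: list_midx_midx_list)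
  qed
  show "list_midx ` lists_upto N \<subseteq> {\<alpha>::'n \<Rightarrow> nat. mlen \<alpha> \<le> N}" by (auto simp: lists_upto_def mlen_list_midx)
qed

lemma finite_midx_le: "finite {\<alpha>::'n::finite \<Rightarrow> nat. mlen \<alpha> \<le> N}"
  unfolding midx_le_eq_image by (rule finite_imageI[OF finite_lists_upto])

definition regular_set :: "(real^'n::finite \<Rightarrow> real) \<Rightarrow> (real^'n) set" where
  "regular_set \<Phi> = {x. grad \<Phi> x \<noteq> 0}"

definition inv_power_sum :: "int \<Rightarrow> int \<Rightarrow> real \<Rightarrow> real" where
  "inv_power_sum a b r = (\<Sum>k\<in>{a..b}. (1/r) powi k)"

definition grad_sq :: "(real^'n::finite \<Rightarrow> real) \<Rightarrow> real^'n \<Rightarrow> real" where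
  "grad_sq \<Phi> x = (\<Sum>j\<in>UNIV. pd j \<Phi> x * pd j \<Phi> x)"

lemma norm_grad_power2: "(norm (grad \<Phi> x))\<^sup>2 = grad_sq \<Phi> x"
  unfolding power2_norm_eq_inner inner_vec_def grad_def grad_sq_def by simp

lemma grad_component: "grad \<Phi> x $ j = pd j \<Phi> x"
  unfolding grad_def by simp

lemma pd_le_norm_grad: "\<bar>pd j \<Phi> x\<bar> \<le> norm (grad \<Phi> x)"
  using component_le_norm_cart[of "grad \<Phi> x" j] by (simp add: grad_component)

lemma regular_set_grad_sq: "regular_set \<Phi> = {x. grad_sq \<Phi> x \<noteq> 0}"
  unfolding regular_set_def by (simp flip: norm_grad_power2)

lemma smooth_on_grad_sq: "smooth_on UNIV \<Phi> \<Longrightarrow> smooth_on UNIV (grad_sq \<Phi>)"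
  unfolding grad_sq_def[abs_def]
  by (intro smooth_on_sum smooth_on_mult smooth_on_pd) auto

lemma open_regular_set: "smooth_on UNIV \<Phi> \<Longrightarrow> open (regular_set \<Phi>)"
  unfolding regular_set_grad_sq by (rule open_Collect_neq) (auto intro: smooth_on_continuous_on smooth_on_grad_sq)

lemma inv_power_sum_nonneg: "r > 0 \<Longrightarrow> 0 \<le> inv_power_sum a b r"
  unfolding inv_power_sum_def by (intro sum_nonneg) simp

lemma inv_power_sum_mono: "r > 0 \<Longrightarrow> a' \<le> a \<Longrightarrow> b \<le> b' \<Longrightarrow> inv_power_sum a b r \<le> inv_power_sum a' b' r"
  unfolding inv_power_sum_def by (intro sum_mono2) auto

lemma inv_power_sum_ge_term: "r > 0 \<Longrightarrow> a \<le> k \<Longrightarrow> k \<le> b \<Longrightarrow> (1/r) powi k \<le> inv_power_sum a b r"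
  unfolding inv_power_sum_def by (rule member_le_sum) auto

lemma inv_power_sum_ge_one: "r > 0 \<Longrightarrow> a \<le> 0 \<Longrightarrow> 0 \<le> b \<Longrightarrow> 1 \<le> inv_power_sum a b r"
  using inv_power_sum_ge_term[of r a 0 b] by simp

lemma inv_power_sum_minus_one: "r > 0 \<Longrightarrow> inv_power_sum (-1) (-1) r = r"
  unfolding inv_power_sum_def by (simp add: power_int_minus)

lemma inv_power_sum_nat:
  assumes "r > 0"
  shows "inv_power_sum (int a) (int b) r = (\<Sum>k = a..b. 1 / r ^ k)"
proof -
  have "inv_power_sum (int a) (int b) r = (\<Sum>k\<in>int ` {a..b}. (1/r) powi k)"
    unfolding inv_power_sum_def image_int_atLeastAtMost ..
  also have "\<dots> = (\<Sum>k = a..b. 1 / r ^ k)"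
    by (subst sum.reindex) (auto simp: inj_on_def power_one_over)
  finally show ?thesis .
qed

lemma inv_power_sum_mult_power:
  assumes r: "r > 0"
  shows "inv_power_sum a b r * (1/r) powi k = inv_power_sum (a+k) (b+k) r"
proof -
  have "inv_power_sum a b r * (1/r) powi k = (\<Sum>j\<in>{a..b}. (1/r) powi (j + k))"
    unfolding inv_power_sum_def sum_distrib_right using r by (simp add: power_int_add)
  also have "\<dots> = (\<Sum>j\<in>(\<lambda>j. j + k) ` {a..b}. (1/r) powi j)"
    by (subst sum.reindex) (auto simp: inj_on_def)
  also have "(\<lambda>j. j + k) ` {a..b} = {a+k..b+k}"
  proof -
    have "x \<in> (\<lambda>j. j + k) ` {a..b}" if "x \<in> {a+k..b+k}" for x
      using that by (intro rev_image_eqI[of "x - k"]) auto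
    thus ?thesis by auto
  qed
  finally show ?thesis unfolding inv_power_sum_def .
qed

lemma inv_power_sum_mult_le:
  assumes "r > 0"
  shows "inv_power_sum a1 b1 r * inv_power_sum a2 b2 r \<le> real (card {a2..b2}) * inv_power_sum (a1+a2) (b1+b2) r"
proof -
  have "inv_power_sum a1 b1 r * inv_power_sum a2 b2 r = (\<Sum>k\<in>{a2..b2}. inv_power_sum a1 b1 r * (1/r) powi k)"
    unfolding inv_power_sum_def[of a2] sum_distrib_left ..
  also have "\<dots> = (\<Sum>k\<in>{a2..b2}. inv_power_sum (a1+k) (b1+k) r)"
    using inv_power_sum_mult_power[OF assms] by simp
  also have "\<dots> \<le> (\<Sum>k\<in>{a2..b2}. inv_power_sum (a1+a2) (b1+b2) r)"
    by (rule sum_mono) (rule inv_power_sum_mono[OF assms]; simp)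
  also have "\<dots> = real (card {a2..b2}) * inv_power_sum (a1+a2) (b1+b2) r" by simp
  finally show ?thesis .
qed

lemma MM_finite_mono: "k1 \<le> k2 \<Longrightarrow> MM_finite \<Phi> V k2 \<Longrightarrow> MM_finite \<Phi> V k1"
  unfolding MM_finite_def by auto

lemma finite_midx_between: "finite {\<gamma>::'n::finite\<Rightarrow>nat. 2 \<le> mlen \<gamma> \<and> mlen \<gamma> \<le> k}"
  by (rule finite_subset[OF _ finite_midx_le[of k]]) auto

lemma SUP_abs_nonneg:
  fixes f :: "'a \<Rightarrow> real"
  assumes "bdd_above ((\<lambda>\<xi>. \<bar>f \<xi>\<bar>) ` V)" "\<xi> \<in> V"
  shows "0 \<le> (SUP \<xi>\<in>V. \<bar>f \<xi>\<bar>)"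
  using cSUP_upper[OF assms(2,1)] by (meson abs_ge_zero order_trans)

lemma SUP_abs_dpart_nonneg:
  assumes "MM_finite \<Phi> V k" "\<xi> \<in> V" "\<gamma> \<in> {\<gamma>. 2 \<le> mlen \<gamma> \<and> mlen \<gamma> \<le> k}"
  shows "0 \<le> (SUP \<xi>\<in>V. \<bar>dpart \<gamma> \<Phi> \<xi>\<bar>)"
  using assms by (intro SUP_abs_nonneg) (auto simp: MM_finite_def)

lemma MM_nonneg:
  assumes "MM_finite \<Phi> V k" "\<xi> \<in> V"
  shows "0 \<le> MM \<Phi> V k"
  unfolding MM_def using SUP_abs_dpart_nonneg[OF assms]
  by (auto intro!: sum_nonneg)

text \<open>\<open>MM \<Phi> V k\<close> is \<open>1\<close> for \<open>k \<le> 1\<close> but may be smaller for \<open>k \<ge> 2\<close>, so it is only monotone up to \<open>max 1\<close>.\<close>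

lemma MM_le_max_1:
  assumes "k1 \<le> k2" "MM_finite \<Phi> V k2" "\<xi> \<in> V"
  shows "MM \<Phi> V k1 \<le> max 1 (MM \<Phi> V k2)"
proof (cases "k1 \<le> 1")
  case True thus ?thesis by (simp add: MM_def)
next
  case False
  hence "MM \<Phi> V k1 \<le> MM \<Phi> V k2"
    unfolding MM_def using assms False
    by (auto intro!: sum_mono2 finite_midx_between SUP_abs_dpart_nonneg[OF assms(2,3)])
  thus ?thesis by simp
qed

lemma abs_pderivs_le_MM:
  assumes "smooth_on UNIV \<Phi>" "2 \<le> length l" "length l \<le> k" "MM_finite \<Phi> V k" "\<xi> \<in> V"
  shows "\<bar>pderivs l \<Phi> \<xi>\<bar> \<le> MM \<Phi> V k"
proof -
  have eq: "pderivs l \<Phi> \<xi> = dpart (list_midx l) \<Phi> \<xi>" by (rule pderivs_eq_dpart[OF open_UNIV assms(1)]) simp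
  have mem: "list_midx l \<in> {\<gamma>. 2 \<le> mlen \<gamma> \<and> mlen \<gamma> \<le> k}" using assms(2,3) by (simp add: mlen_list_midx)
  have bdd: "\<And>\<gamma>. \<gamma> \<in> {\<gamma>. 2 \<le> mlen \<gamma> \<and> mlen \<gamma> \<le> k} \<Longrightarrow> bdd_above ((\<lambda>\<xi>. \<bar>dpart \<gamma> \<Phi> \<xi>\<bar>) ` V)"
    using assms(4) unfolding MM_finite_def by simp
  have "\<bar>pderivs l \<Phi> \<xi>\<bar> \<le> (SUP \<xi>\<in>V. \<bar>dpart (list_midx l) \<Phi> \<xi>\<bar>)"
    unfolding eq by (rule cSUP_upper[OF assms(5) bdd[OF mem]])
  also have "\<dots> \<le> (\<Sum>\<gamma>\<in>{\<gamma>. 2 \<le> mlen \<gamma> \<and> mlen \<gamma> \<le> k}. (SUP \<xi>\<in>V. \<bar>dpart \<gamma> \<Phi> \<xi>\<bar>))"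
    by (rule member_le_sum[OF mem]) (rule SUP_abs_dpart_nonneg[OF assms(4,5)], simp_all add: finite_midx_between)
  also have "\<dots> = MM \<Phi> V k" using assms(2,3) by (simp add: MM_def)
  finally show ?thesis .
qed


lemma pderivs_add:
  assumes "open S" "smooth_on S f" "smooth_on S g" "x \<in> S"
  shows "pderivs l (\<lambda>y. f y + g y) x = pderivs l f x + pderivs l g x"
  using assms(4)
proof (induction l arbitrary: x)
  case Nil thus ?case by simp
next
  case (Cons i l)
  have "pderivs (i # l) (\<lambda>y. f y + g y) x = pd i (\<lambda>y. pderivs l f y + pderivs l g y) x"
    using pd_cong_open[OF assms(1) Cons.prems, of "pderivs l (\<lambda>y. f y + g y)" "\<lambda>y. pderivs l f y + pderivs l g y" i]
      Cons.IH by simp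
  also have "\<dots> = pd i (pderivs l f) x + pd i (pderivs l g) x"
    using pd_add[OF smooth_on_pd_differentiable[OF smooth_on_pderivs[OF assms(2)] Cons.prems] smooth_on_pd_differentiable[OF smooth_on_pderivs[OF assms(3)] Cons.prems]]
    by simp
  finally show ?case by simp
qed

lemma pderivs_uminus:
  assumes "open S" "smooth_on S f" "x \<in> S"
  shows "pderivs l (\<lambda>y. - f y) x = - pderivs l f x"
  using assms(3)
proof (induction l arbitrary: x)
  case Nil thus ?case by simp
next
  case (Cons i l)
  have "pderivs (i # l) (\<lambda>y. - f y) x = pd i (\<lambda>y. - pderivs l f y) x"
    using pd_cong_open[OF assms(1) Cons.prems, of "pderivs l (\<lambda>y. - f y)" "\<lambda>y. - pderivs l f y" i]
      Cons.IH by simp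
  also have "\<dots> = - pd i (pderivs l f) x"
    using pd_uminus[OF smooth_on_pd_differentiable[OF smooth_on_pderivs[OF assms(2)] Cons.prems]] by simp
  finally show ?case by simp
qed

section \<open>Admissible families of coefficients\<close>

definition growth_fun :: "(real \<Rightarrow> real) \<Rightarrow> bool" where
  "growth_fun F \<longleftrightarrow> mono_on {0..} F \<and> (\<forall>t\<ge>0. 0 \<le> F t)"

lemma growth_fun_nonneg: "growth_fun F \<Longrightarrow> 0 \<le> t \<Longrightarrow> 0 \<le> F t"
  unfolding growth_fun_def by blast

lemma growth_fun_mono: "growth_fun F \<Longrightarrow> 0 \<le> s \<Longrightarrow> s \<le> t \<Longrightarrow> F s \<le> F t"
  unfolding growth_fun_def by (auto intro: mono_onD)

lemma growth_fun_const: "0 \<le> c \<Longrightarrow> growth_fun (\<lambda>_. c)"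
  unfolding growth_fun_def by (simp add: mono_on_def)

lemma growth_fun_id: "growth_fun (\<lambda>t. t)"
  unfolding growth_fun_def by (simp add: mono_on_def)

lemma growth_fun_add: "growth_fun F \<Longrightarrow> growth_fun G \<Longrightarrow> growth_fun (\<lambda>t. F t + G t)"
  unfolding growth_fun_def mono_on_def by (auto intro: add_mono)

lemma growth_fun_mult:
  assumes "growth_fun F" "growth_fun G"
  shows "growth_fun (\<lambda>t. F t * G t)"
  unfolding growth_fun_def
proof (intro conjI mono_onI allI impI)
  fix r t :: real assume "r \<in> {0..}" "t \<in> {0..}" "r \<le> t"
  then show "F r * G r \<le> F t * G t"
    using growth_fun_mono[OF assms(1)] growth_fun_mono[OF assms(2)]
      growth_fun_nonneg[OF assms(1)] growth_fun_nonneg[OF assms(2)]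
    by (simp add: mult_mono)
qed (use assms growth_fun_nonneg in auto)

lemma growth_fun_max_1:
  assumes "growth_fun F"
  shows "growth_fun (\<lambda>t. F (max 1 t))"
  unfolding growth_fun_def
proof (intro conjI mono_onI allI impI)
  fix r t :: real assume "r \<le> t"
  then show "F (max 1 r) \<le> F (max 1 t)" using growth_fun_mono[OF assms] by simp
qed (use assms growth_fun_nonneg in auto)

definition pderivs_bounded_by ::
    "(real \<Rightarrow> real) \<Rightarrow> nat \<Rightarrow> int \<Rightarrow> int \<Rightarrow> 'n::finite list \<Rightarrow> ((real^'n \<Rightarrow> real) \<Rightarrow> real^'n \<Rightarrow> real) \<Rightarrow> bool"
  where
  "pderivs_bounded_by F s a b l f \<longleftrightarrow>
     (\<forall>\<Phi> V \<xi>. smooth_on UNIV \<Phi> \<longrightarrow> MM_finite \<Phi> V (s + length l) \<longrightarrow> \<xi> \<in> V \<longrightarrow> \<xi> \<in> regular_set \<Phi> \<longrightarrow>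
        \<bar>pderivs l (f \<Phi>) \<xi>\<bar> \<le> F (MM \<Phi> V (s + length l)) * inv_power_sum a (b + int (length l)) (norm (grad \<Phi> \<xi>)))"

definition pderivs_bounded ::
    "nat \<Rightarrow> int \<Rightarrow> int \<Rightarrow> 'n::finite list \<Rightarrow> ((real^'n \<Rightarrow> real) \<Rightarrow> real^'n \<Rightarrow> real) \<Rightarrow> bool" where
  "pderivs_bounded s a b l f \<longleftrightarrow> (\<exists>F. growth_fun F \<and> pderivs_bounded_by F s a b l f)"

definition smooth_family :: "((real^'n::finite \<Rightarrow> real) \<Rightarrow> real^'n \<Rightarrow> real) \<Rightarrow> bool" where
  "smooth_family f \<longleftrightarrow> (\<forall>\<Phi>. smooth_on UNIV \<Phi> \<longrightarrow> smooth_on (regular_set \<Phi>) (f \<Phi>))"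

definition admissible :: "nat \<Rightarrow> nat \<Rightarrow> int \<Rightarrow> int \<Rightarrow> ((real^'n::finite \<Rightarrow> real) \<Rightarrow> real^'n \<Rightarrow> real) \<Rightarrow> bool" where
  "admissible n s a b f \<longleftrightarrow> smooth_family f \<and> (\<forall>l::'n list. length l \<le> n \<longrightarrow> pderivs_bounded s a b l f)"

lemma pderivs_bounded_byI:
  assumes "\<And>\<Phi> V \<xi>. smooth_on UNIV \<Phi> \<Longrightarrow> MM_finite \<Phi> V (s + length l) \<Longrightarrow> \<xi> \<in> V \<Longrightarrow> \<xi> \<in> regular_set \<Phi> \<Longrightarrow>
        \<bar>pderivs l (f \<Phi>) \<xi>\<bar> \<le> F (MM \<Phi> V (s + length l)) * inv_power_sum a (b + int (length l)) (norm (grad \<Phi> \<xi>))"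
  shows "pderivs_bounded_by F s a b l f"
  using assms unfolding pderivs_bounded_by_def by blast

lemma pderivs_bounded_byD:
  assumes "pderivs_bounded_by F s a b l f"
    "smooth_on UNIV \<Phi>" "MM_finite \<Phi> V (s + length l)" "\<xi> \<in> V" "\<xi> \<in> regular_set \<Phi>"
  shows "\<bar>pderivs l (f \<Phi>) \<xi>\<bar> \<le> F (MM \<Phi> V (s + length l)) * inv_power_sum a (b + int (length l)) (norm (grad \<Phi> \<xi>))"
  using assms unfolding pderivs_bounded_by_def by blast

lemma pderivs_bounded_by_abs_le:
  assumes "pderivs_bounded_by F s a b l f"
    "\<And>\<Phi> \<xi>. smooth_on UNIV \<Phi> \<Longrightarrow> \<xi> \<in> regular_set \<Phi> \<Longrightarrow> \<bar>pderivs l (g \<Phi>) \<xi>\<bar> \<le> \<bar>pderivs l (f \<Phi>) \<xi>\<bar>"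
  shows "pderivs_bounded_by F s a b l g"
  using assms unfolding pderivs_bounded_by_def by (meson order_trans)

lemma pderivs_bounded_by_snoc:
  "pderivs_bounded_by F s a b (l @ [i]) f \<longleftrightarrow> pderivs_bounded_by F (s + 1) a (b + 1) l (\<lambda>\<Phi>. pd i (f \<Phi>))"
  unfolding pderivs_bounded_by_def by (simp add: pderivs_append ac_simps)

lemma pderivs_boundedI: "growth_fun F \<Longrightarrow> pderivs_bounded_by F s a b l f \<Longrightarrow> pderivs_bounded s a b l f"
  unfolding pderivs_bounded_def by blast

lemma pderivs_boundedE:
  assumes "pderivs_bounded s a b l f"
  obtains F where "growth_fun F" "pderivs_bounded_by F s a b l f"
  using assms unfolding pderivs_bounded_def by blast

lemma norm_grad_pos: "\<xi> \<in> regular_set \<Phi> \<Longrightarrow> norm (grad \<Phi> \<xi>) > 0"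
  unfolding regular_set_def by simp

lemma pderivs_bounded_by_mono:
  fixes f :: "(real^'n::finite \<Rightarrow> real) \<Rightarrow> real^'n \<Rightarrow> real"
  assumes F: "growth_fun F" "pderivs_bounded_by F s a b l f" and le: "s \<le> s'" "a' \<le> a" "b \<le> b'"
  shows "pderivs_bounded_by (\<lambda>t. F (max 1 t)) s' a' b' l f"
proof (rule pderivs_bounded_byI)
  fix \<Phi> :: "real^'n \<Rightarrow> real" and V \<xi>
  assume h: "smooth_on UNIV \<Phi>" "MM_finite \<Phi> V (s' + length l)" "\<xi> \<in> V" "\<xi> \<in> regular_set \<Phi>"
  have fin: "MM_finite \<Phi> V (s + length l)" using MM_finite_mono[OF _ h(2)] le(1) by simp
  have r: "norm (grad \<Phi> \<xi>) > 0" using norm_grad_pos[OF h(4)] .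
  have M: "MM \<Phi> V (s + length l) \<le> max 1 (MM \<Phi> V (s' + length l))"
    using MM_le_max_1[OF _ h(2,3)] le(1) by simp
  have "\<bar>pderivs l (f \<Phi>) \<xi>\<bar> \<le> F (MM \<Phi> V (s + length l)) * inv_power_sum a (b + int (length l)) (norm (grad \<Phi> \<xi>))"
    by (rule pderivs_bounded_byD[OF F(2) h(1) fin h(3,4)])
  also have "\<dots> \<le> F (max 1 (MM \<Phi> V (s' + length l))) * inv_power_sum a' (b' + int (length l)) (norm (grad \<Phi> \<xi>))"
    using le(2,3) M
    by (intro mult_mono growth_fun_mono[OF F(1)] MM_nonneg[OF fin h(3)] inv_power_sum_mono[OF r]
        growth_fun_nonneg[OF F(1)] inv_power_sum_nonneg[OF r]) auto
  finally show "\<bar>pderivs l (f \<Phi>) \<xi>\<bar>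
      \<le> F (max 1 (MM \<Phi> V (s' + length l))) * inv_power_sum a' (b' + int (length l)) (norm (grad \<Phi> \<xi>))" .
qed

lemma pderivs_bounded_mono:
  "pderivs_bounded s a b l f \<Longrightarrow> s \<le> s' \<Longrightarrow> a' \<le> a \<Longrightarrow> b \<le> b' \<Longrightarrow> pderivs_bounded s' a' b' l f"
  by (meson growth_fun_max_1 pderivs_boundedE pderivs_boundedI pderivs_bounded_by_mono)

lemma admissibleI: "smooth_family f \<Longrightarrow> (\<And>l. length l \<le> n \<Longrightarrow> pderivs_bounded s a b l f) \<Longrightarrow> admissible n s a b f"
  unfolding admissible_def by blast

lemma admissible_smooth_family: "admissible n s a b f \<Longrightarrow> smooth_family f"
  unfolding admissible_def by simp

lemma admissible_pderivs_bounded: "admissible n s a b f \<Longrightarrow> length l \<le> n \<Longrightarrow> pderivs_bounded s a b l f"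
  unfolding admissible_def by blast

lemma smooth_familyD: "smooth_family f \<Longrightarrow> smooth_on UNIV \<Phi> \<Longrightarrow> smooth_on (regular_set \<Phi>) (f \<Phi>)"
  unfolding smooth_family_def by blast

lemma admissible_0_iff: "admissible 0 s a b f \<longleftrightarrow> smooth_family f \<and> pderivs_bounded s a b [] f"
  unfolding admissible_def by auto

lemma admissible_mono:
  assumes "admissible n s a b f" "n' \<le> n" "s \<le> s'" "a' \<le> a" "b \<le> b'"
  shows "admissible n' s' a' b' f"
  using assms pderivs_bounded_mono unfolding admissible_def by (meson order_trans)

lemma admissible_cong:
  fixes f g :: "(real^'n::finite \<Rightarrow> real) \<Rightarrow> real^'n \<Rightarrow> real"
  assumes "admissible n s a b f" "\<And>\<Phi> x. smooth_on UNIV \<Phi> \<Longrightarrow> x \<in> regular_set \<Phi> \<Longrightarrow> f \<Phi> x = g \<Phi> x"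
  shows "admissible n s a b g"
proof (rule admissibleI)
  show "smooth_family g"
    unfolding smooth_family_def
    using smooth_on_cong_open[OF open_regular_set] assms
      smooth_familyD[OF admissible_smooth_family[OF assms(1)]] by metis
  fix l :: "'n list" assume "length l \<le> n"
  then obtain F where F: "growth_fun F" "pderivs_bounded_by F s a b l f"
    using assms(1) by (meson admissible_pderivs_bounded pderivs_boundedE)
  have "pderivs_bounded_by F s a b l g"
    by (rule pderivs_bounded_by_abs_le[OF F(2)])
      (use pderivs_cong_open[OF open_regular_set] assms(2) in \<open>metis order_refl\<close>)
  then show "pderivs_bounded s a b l g" using F(1) by (rule pderivs_boundedI[rotated])
qed

lemma admissible_zero: "admissible n s a b (\<lambda>(\<Phi>::real^'n::finite \<Rightarrow> real) x. 0)"
proof (rule admissibleI)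
  show "smooth_family (\<lambda>\<Phi> x. 0 :: real)" by (simp add: smooth_family_def smooth_on_const)
  have "pderivs_bounded_by (\<lambda>_. 0) s a b l (\<lambda>\<Phi> x. 0)" for l :: "'n list"
    by (rule pderivs_bounded_byI) (simp add: pderivs_const)
  then show "pderivs_bounded s a b l (\<lambda>\<Phi> x. 0)" for l :: "'n list"
    using growth_fun_const[of 0] by (auto intro: pderivs_boundedI)
qed

lemma admissible_one: "admissible n 1 0 0 (\<lambda>(\<Phi>::real^'n::finite \<Rightarrow> real) x. 1)"
proof (rule admissibleI)
  show "smooth_family (\<lambda>\<Phi> x. 1 :: real)" by (simp add: smooth_family_def smooth_on_const)
  have "pderivs_bounded_by (\<lambda>_. 1) 1 0 0 l (\<lambda>\<Phi> x. 1)" for l :: "'n list"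
  proof (rule pderivs_bounded_byI)
    fix \<Phi> :: "real^'n \<Rightarrow> real" and V \<xi> assume "\<xi> \<in> regular_set \<Phi>"
    then have "1 \<le> inv_power_sum 0 (0 + int (length l)) (norm (grad \<Phi> \<xi>))"
      by (intro inv_power_sum_ge_one norm_grad_pos) auto
    then show "\<bar>pderivs l (\<lambda>x. 1) \<xi>\<bar> \<le> 1 * inv_power_sum 0 (0 + int (length l)) (norm (grad \<Phi> \<xi>))"
      by (cases "l = []") (simp_all add: pderivs_const)
  qed
  then show "pderivs_bounded 1 0 0 l (\<lambda>\<Phi> x. 1)" for l :: "'n list"
    using growth_fun_const[of 1] by (auto intro: pderivs_boundedI)
qed

lemma admissible_add:
  fixes f g :: "(real^'n::finite \<Rightarrow> real) \<Rightarrow> real^'n \<Rightarrow> real"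
  assumes "admissible n s a b f" "admissible n s a b g"
  shows "admissible n s a b (\<lambda>\<Phi> x. f \<Phi> x + g \<Phi> x)"
proof (rule admissibleI)
  note smooth = smooth_familyD[OF admissible_smooth_family]
  show "smooth_family (\<lambda>\<Phi> x. f \<Phi> x + g \<Phi> x)"
    unfolding smooth_family_def using assms by (blast intro: smooth_on_add open_regular_set smooth)
  fix l :: "'n list" assume "length l \<le> n"
  then obtain F G where F: "growth_fun F" "pderivs_bounded_by F s a b l f"
    and G: "growth_fun G" "pderivs_bounded_by G s a b l g"
    using assms by (meson admissible_pderivs_bounded pderivs_boundedE)
  have "pderivs_bounded_by (\<lambda>t. F t + G t) s a b l (\<lambda>\<Phi> x. f \<Phi> x + g \<Phi> x)"
  proof (rule pderivs_bounded_byI)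
    fix \<Phi> :: "real^'n \<Rightarrow> real" and V \<xi>
    assume h: "smooth_on UNIV \<Phi>" "MM_finite \<Phi> V (s + length l)" "\<xi> \<in> V" "\<xi> \<in> regular_set \<Phi>"
    have "pderivs l (\<lambda>x. f \<Phi> x + g \<Phi> x) \<xi> = pderivs l (f \<Phi>) \<xi> + pderivs l (g \<Phi>) \<xi>"
      using h by (intro pderivs_add[OF open_regular_set smooth[OF assms(1)] smooth[OF assms(2)]])
    then show "\<bar>pderivs l (\<lambda>x. f \<Phi> x + g \<Phi> x) \<xi>\<bar>
        \<le> (F (MM \<Phi> V (s + length l)) + G (MM \<Phi> V (s + length l))) * inv_power_sum a (b + int (length l)) (norm (grad \<Phi> \<xi>))"
      using pderivs_bounded_byD[OF F(2) h] pderivs_bounded_byD[OF G(2) h] by (simp add: distrib_right)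
  qed
  then show "pderivs_bounded s a b l (\<lambda>\<Phi> x. f \<Phi> x + g \<Phi> x)"
    using growth_fun_add[OF F(1) G(1)] by (rule pderivs_boundedI[rotated])
qed

lemma admissible_uminus:
  fixes f :: "(real^'n::finite \<Rightarrow> real) \<Rightarrow> real^'n \<Rightarrow> real"
  assumes "admissible n s a b f"
  shows "admissible n s a b (\<lambda>\<Phi> x. - f \<Phi> x)"
proof (rule admissibleI)
  note smooth = smooth_familyD[OF admissible_smooth_family[OF assms]]
  show "smooth_family (\<lambda>\<Phi> x. - f \<Phi> x)"
    unfolding smooth_family_def by (blast intro: smooth_on_uminus open_regular_set smooth)
  fix l :: "'n list" assume "length l \<le> n"
  then obtain F where F: "growth_fun F" "pderivs_bounded_by F s a b l f"
    using assms by (meson admissible_pderivs_bounded pderivs_boundedE)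
  have "pderivs_bounded_by F s a b l (\<lambda>\<Phi> x. - f \<Phi> x)"
    by (rule pderivs_bounded_by_abs_le[OF F(2)])
      (simp add: pderivs_uminus[OF open_regular_set smooth])
  then show "pderivs_bounded s a b l (\<lambda>\<Phi> x. - f \<Phi> x)" using F(1) by (rule pderivs_boundedI[rotated])
qed

lemma admissible_sum:
  assumes "finite A" "\<And>k. k \<in> A \<Longrightarrow> admissible n s a b (f k)"
  shows "admissible n s a b (\<lambda>\<Phi> x. \<Sum>k\<in>A. f k \<Phi> x)"
  using assms
proof (induction A rule: finite_induct)
  case empty thus ?case using admissible_zero by simp
next
  case (insert k A)
  have "admissible n s a b (\<lambda>\<Phi> x. f k \<Phi> x + (\<Sum>k\<in>A. f k \<Phi> x))"
    by (rule admissible_add) (use insert in auto)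
  thus ?case using insert by simp
qed

lemma admissible_pd:
  fixes f :: "(real^'n::finite \<Rightarrow> real) \<Rightarrow> real^'n \<Rightarrow> real"
  assumes "admissible (Suc n) s a b f"
  shows "admissible n (s + 1) a (b + 1) (\<lambda>\<Phi>. pd i (f \<Phi>))"
proof (rule admissibleI)
  show "smooth_family (\<lambda>\<Phi>. pd i (f \<Phi>))"
    using smooth_familyD[OF admissible_smooth_family[OF assms]]
    by (auto simp: smooth_family_def intro: smooth_on_pd)
  fix l :: "'n list" assume "length l \<le> n"
  then have "pderivs_bounded s a b (l @ [i]) f" using admissible_pderivs_bounded[OF assms] by simp
  then show "pderivs_bounded (s + 1) a (b + 1) l (\<lambda>\<Phi>. pd i (f \<Phi>))"
    by (simp add: pderivs_bounded_def pderivs_bounded_by_snoc)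
qed

lemma admissible_SucI:
  fixes f :: "(real^'n::finite \<Rightarrow> real) \<Rightarrow> real^'n \<Rightarrow> real"
  assumes "smooth_family f" "pderivs_bounded s a b [] f" "\<And>i. admissible n (s + 1) a (b + 1) (\<lambda>\<Phi>. pd i (f \<Phi>))"
  shows "admissible (Suc n) s a b f"
proof (rule admissibleI[OF assms(1)])
  fix l :: "'n list" assume len: "length l \<le> Suc n"
  show "pderivs_bounded s a b l f"
  proof (cases l rule: rev_exhaust)
    case Nil thus ?thesis using assms(2) by simp
  next
    case (snoc l' i)
    with len have "pderivs_bounded (s + 1) a (b + 1) l' (\<lambda>\<Phi>. pd i (f \<Phi>))"
      using admissible_pderivs_bounded[OF assms(3)] by simp
    thus ?thesis using snoc by (simp add: pderivs_bounded_def pderivs_bounded_by_snoc)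
  qed
qed

lemma abs_mult_le_inv_power_sum:
  assumes "r > 0" "\<bar>x\<bar> \<le> u * inv_power_sum a1 b1 r" "\<bar>y\<bar> \<le> v * inv_power_sum a2 b2 r" "0 \<le> u" "0 \<le> v"
  shows "\<bar>x * y\<bar> \<le> real (card {a2..b2}) * (u * v) * inv_power_sum (a1 + a2) (b1 + b2) r"
proof -
  have "\<bar>x * y\<bar> \<le> (u * inv_power_sum a1 b1 r) * (v * inv_power_sum a2 b2 r)"
    unfolding abs_mult using assms(2,3) by (rule mult_mono) (simp_all add: assms(4) inv_power_sum_nonneg[OF assms(1)])
  also have "\<dots> = (u * v) * (inv_power_sum a1 b1 r * inv_power_sum a2 b2 r)" by (simp add: ac_simps)
  also have "\<dots> \<le> (u * v) * (real (card {a2..b2}) * inv_power_sum (a1 + a2) (b1 + b2) r)"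
    using inv_power_sum_mult_le[OF assms(1)] assms(4,5) by (intro mult_left_mono) auto
  finally show ?thesis by (simp add: ac_simps)
qed

lemma pderivs_bounded_Nil_mult:
  fixes f g :: "(real^'n::finite \<Rightarrow> real) \<Rightarrow> real^'n \<Rightarrow> real"
  assumes "pderivs_bounded s1 a1 b1 [] f" "pderivs_bounded s2 a2 b2 [] g"
  shows "pderivs_bounded (max s1 s2) (a1 + a2) (b1 + b2) [] (\<lambda>\<Phi> x. f \<Phi> x * g \<Phi> x)"
proof -
  obtain F G where F: "growth_fun F" "pderivs_bounded_by F s1 a1 b1 [] f"
    and G: "growth_fun G" "pderivs_bounded_by G s2 a2 b2 [] g"
    using assms by (meson pderivs_boundedE)
  let ?F = "\<lambda>t. F (max 1 t)" and ?G = "\<lambda>t. G (max 1 t)"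
  have F': "pderivs_bounded_by ?F (max s1 s2) a1 b1 [] f" and G': "pderivs_bounded_by ?G (max s1 s2) a2 b2 [] g"
    by (rule pderivs_bounded_by_mono[OF F(1,2)] pderivs_bounded_by_mono[OF G(1,2)]; simp)+
  define H where "H t = real (card {a2..b2}) * (?F t * ?G t)" for t
  have "growth_fun H"
    unfolding H_def by (intro growth_fun_mult growth_fun_const growth_fun_max_1 F(1) G(1)) simp
  moreover have "pderivs_bounded_by H (max s1 s2) (a1 + a2) (b1 + b2) [] (\<lambda>\<Phi> x. f \<Phi> x * g \<Phi> x)"
  proof (rule pderivs_bounded_byI)
    fix \<Phi> :: "real^'n \<Rightarrow> real" and V \<xi>
    assume h: "smooth_on UNIV \<Phi>" "MM_finite \<Phi> V (max s1 s2 + length ([]::'n list))" "\<xi> \<in> V" "\<xi> \<in> regular_set \<Phi>"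
    show "\<bar>pderivs [] (\<lambda>x. f \<Phi> x * g \<Phi> x) \<xi>\<bar> \<le> H (MM \<Phi> V (max s1 s2 + length ([]::'n list)))
        * inv_power_sum (a1 + a2) (b1 + b2 + int (length ([]::'n list))) (norm (grad \<Phi> \<xi>))"
      using abs_mult_le_inv_power_sum[OF norm_grad_pos[OF h(4)]
          pderivs_bounded_byD[OF F' h, simplified] pderivs_bounded_byD[OF G' h, simplified]]
        growth_fun_nonneg[OF F(1)] growth_fun_nonneg[OF G(1)]
      by (simp add: H_def ac_simps)
  qed
  ultimately show ?thesis by (rule pderivs_boundedI)
qed

lemma admissible_mult:
  fixes f g :: "(real^'n::finite \<Rightarrow> real) \<Rightarrow> real^'n \<Rightarrow> real"
  assumes "admissible n s1 a1 b1 f" "admissible n s2 a2 b2 g"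
  shows "admissible n (max s1 s2) (a1 + a2) (b1 + b2) (\<lambda>\<Phi> x. f \<Phi> x * g \<Phi> x)"
  using assms
proof (induction n arbitrary: s1 a1 b1 f s2 a2 b2 g)
  case 0
  have "smooth_family (\<lambda>\<Phi> x. f \<Phi> x * g \<Phi> x)"
    using "0.prems" unfolding smooth_family_def
    by (blast intro: smooth_on_mult open_regular_set smooth_familyD[OF admissible_smooth_family])
  thus ?case using pderivs_bounded_Nil_mult "0.prems" unfolding admissible_0_iff by blast
next
  case (Suc n)
  note smooth = smooth_familyD[OF admissible_smooth_family]
  have sm: "smooth_family (\<lambda>\<Phi> x. f \<Phi> x * g \<Phi> x)"
    using Suc.prems unfolding smooth_family_def by (blast intro: smooth_on_mult open_regular_set smooth)
  have b0: "pderivs_bounded (max s1 s2) (a1 + a2) (b1 + b2) [] (\<lambda>\<Phi> x. f \<Phi> x * g \<Phi> x)"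
    by (rule pderivs_bounded_Nil_mult[OF admissible_pderivs_bounded[OF Suc.prems(1)]
          admissible_pderivs_bounded[OF Suc.prems(2)]]) simp_all
  show ?case
  proof (rule admissible_SucI[OF sm b0])
    fix i
    have fn: "admissible n s1 a1 b1 f" "admissible n s2 a2 b2 g"
      using Suc.prems admissible_mono by (meson le_SucI order_refl)+
    have "admissible n (max s1 s2 + 1) (a1 + a2) (b1 + b2 + 1) (\<lambda>\<Phi> x. pd i (f \<Phi>) x * g \<Phi> x)"
      by (rule admissible_mono[OF Suc.IH[OF admissible_pd[OF Suc.prems(1)] fn(2)]]) auto
    moreover have "admissible n (max s1 s2 + 1) (a1 + a2) (b1 + b2 + 1) (\<lambda>\<Phi> x. f \<Phi> x * pd i (g \<Phi>) x)"
      by (rule admissible_mono[OF Suc.IH[OF fn(1) admissible_pd[OF Suc.prems(2)]]]) auto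
    ultimately have "admissible n (max s1 s2 + 1) (a1 + a2) (b1 + b2 + 1)
       (\<lambda>\<Phi> x. pd i (f \<Phi>) x * g \<Phi> x + f \<Phi> x * pd i (g \<Phi>) x)"
      by (rule admissible_add)
    then show "admissible n (max s1 s2 + 1) (a1 + a2) (b1 + b2 + 1) (\<lambda>\<Phi>. pd i (\<lambda>x. f \<Phi> x * g \<Phi> x))"
    proof (rule admissible_cong)
      fix \<Phi> :: "real^'n \<Rightarrow> real" and x
      assume h: "smooth_on UNIV \<Phi>" "x \<in> regular_set \<Phi>"
      have "pd_differentiable (f \<Phi>) x i" "pd_differentiable (g \<Phi>) x i"
        using Suc.prems h by (auto intro: smooth_on_pd_differentiable smooth)
      thus "pd i (f \<Phi>) x * g \<Phi> x + f \<Phi> x * pd i (g \<Phi>) x = pd i (\<lambda>x. f \<Phi> x * g \<Phi> x) x"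
        using pd_mult by metis
    qed
  qed
qed

lemma abs_pderivs_le_max_1_MM:
  assumes "smooth_on UNIV \<Phi>" "2 \<le> length l" "length l \<le> k" "MM_finite \<Phi> V k" "\<xi> \<in> V"
    "r > 0" "a \<le> 0" "0 \<le> b"
  shows "\<bar>pderivs l \<Phi> \<xi>\<bar> \<le> max 1 (MM \<Phi> V k) * inv_power_sum a b r"
proof -
  have "\<bar>pderivs l \<Phi> \<xi>\<bar> \<le> max 1 (MM \<Phi> V k) * 1"
    using abs_pderivs_le_MM[OF assms(1-5)] by simp
  also have "\<dots> \<le> max 1 (MM \<Phi> V k) * inv_power_sum a b r"
    using assms(6-8) by (intro mult_left_mono inv_power_sum_ge_one) auto
  finally show ?thesis .
qed

lemma smooth_family_pderivs: "smooth_family (\<lambda>\<Phi>. pderivs l \<Phi>)"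
  unfolding smooth_family_def using smooth_on_pderivs smooth_on_subset by blast

lemma admissible_grad_component: "admissible n 1 (-1) (-1) (\<lambda>\<Phi>. pd j (\<Phi>::real^'n::finite \<Rightarrow> real))"
proof (rule admissibleI)
  show "smooth_family (\<lambda>\<Phi>. pd j (\<Phi>::real^'n \<Rightarrow> real))"
    using smooth_family_pderivs[of "[j]"] by simp
  fix l :: "'n list"
  have "pderivs_bounded_by (\<lambda>t. max 1 t) 1 (-1) (-1) l (\<lambda>\<Phi>. pd j \<Phi>)"
  proof (rule pderivs_bounded_byI)
    fix \<Phi> :: "real^'n \<Rightarrow> real" and V \<xi>
    assume h: "smooth_on UNIV \<Phi>" "MM_finite \<Phi> V (1 + length l)" "\<xi> \<in> V" "\<xi> \<in> regular_set \<Phi>"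
    define r where "r = norm (grad \<Phi> \<xi>)"
    have r: "r > 0" using norm_grad_pos[OF h(4)] unfolding r_def .
    show "\<bar>pderivs l (pd j \<Phi>) \<xi>\<bar>
        \<le> max 1 (MM \<Phi> V (1 + length l)) * inv_power_sum (-1) (-1 + int (length l)) (norm (grad \<Phi> \<xi>))"
    proof (cases "l = []")
      case True
      have "\<bar>pd j \<Phi> \<xi>\<bar> \<le> r" unfolding r_def by (rule pd_le_norm_grad)
      also have "\<dots> \<le> max 1 (MM \<Phi> V 1) * r" using r by (simp add: mult_le_cancel_right1)
      finally show ?thesis using True inv_power_sum_minus_one[OF r] unfolding r_def by simp
    next
      case False
      then have "\<bar>pderivs (l @ [j]) \<Phi> \<xi>\<bar> \<le> max 1 (MM \<Phi> V (1 + length l)) * inv_power_sum (-1) (-1 + int (length l)) r"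
        using r by (intro abs_pderivs_le_max_1_MM[OF h(1) _ _ h(2,3)]) (auto simp: Suc_le_eq)
      then show ?thesis unfolding r_def by (simp add: pderivs_append)
    qed
  qed
  then show "pderivs_bounded 1 (-1) (-1) l (\<lambda>\<Phi>. pd j \<Phi>)"
    using growth_fun_max_1[OF growth_fun_id] by (rule pderivs_boundedI[rotated])
qed

lemma admissible_pderivs:
  assumes "2 \<le> length p"
  shows "admissible n (length p) 0 0 (\<lambda>\<Phi>. pderivs p (\<Phi>::real^'n::finite \<Rightarrow> real))"
proof (rule admissibleI[OF smooth_family_pderivs])
  fix l :: "'n list"
  have "pderivs_bounded_by (\<lambda>t. max 1 t) (length p) 0 0 l (\<lambda>\<Phi>. pderivs p \<Phi>)"
  proof (rule pderivs_bounded_byI)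
    fix \<Phi> :: "real^'n \<Rightarrow> real" and V \<xi>
    assume h: "smooth_on UNIV \<Phi>" "MM_finite \<Phi> V (length p + length l)" "\<xi> \<in> V" "\<xi> \<in> regular_set \<Phi>"
    have "\<bar>pderivs (l @ p) \<Phi> \<xi>\<bar>
        \<le> max 1 (MM \<Phi> V (length p + length l)) * inv_power_sum 0 (0 + int (length l)) (norm (grad \<Phi> \<xi>))"
      using assms norm_grad_pos[OF h(4)] by (intro abs_pderivs_le_max_1_MM[OF h(1) _ _ h(2,3)]) auto
    then show "\<bar>pderivs l (pderivs p \<Phi>) \<xi>\<bar>
        \<le> max 1 (MM \<Phi> V (length p + length l)) * inv_power_sum 0 (0 + int (length l)) (norm (grad \<Phi> \<xi>))"
      by (simp add: pderivs_append)
  qed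
  then show "pderivs_bounded (length p) 0 0 l (\<lambda>\<Phi>. pderivs p \<Phi>)"
    using growth_fun_max_1[OF growth_fun_id] by (rule pderivs_boundedI[rotated])
qed

definition inv_grad_sq :: "(real^'n::finite \<Rightarrow> real) \<Rightarrow> real^'n \<Rightarrow> real" where
  "inv_grad_sq \<Phi> x = inverse (grad_sq \<Phi> x)"

lemma pd_inv_grad_sq:
  assumes "smooth_on UNIV \<Phi>" "x \<in> regular_set \<Phi>"
  shows "pd i (inv_grad_sq \<Phi>) x = - ((\<Sum>j\<in>UNIV. pd i (pd j \<Phi>) x * pd j \<Phi> x + pd j \<Phi> x * pd i (pd j \<Phi>) x)
      * (inv_grad_sq \<Phi> x * inv_grad_sq \<Phi> x))"
proof -
  have q0: "grad_sq \<Phi> x \<noteq> 0" using assms(2) regular_set_grad_sq by blast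
  have lq: "pd_differentiable (grad_sq \<Phi>) x i"
    using smooth_on_pd_differentiable[OF smooth_on_grad_sq[OF assms(1)]] by simp
  have ld: "pd_differentiable (pd j \<Phi>) x i" for j
    using smooth_on_pd_differentiable[OF smooth_on_pd[OF assms(1)]] by simp
  have "pd i (inv_grad_sq \<Phi>) x = - (pd i (grad_sq \<Phi>) x * (inv_grad_sq \<Phi> x * inv_grad_sq \<Phi> x))"
    using pd_inverse[OF lq q0] unfolding inv_grad_sq_def[abs_def] by simp
  also have "pd i (grad_sq \<Phi>) x = (\<Sum>j\<in>UNIV. pd i (\<lambda>y. pd j \<Phi> y * pd j \<Phi> y) x)"
    unfolding grad_sq_def[abs_def] by (rule pd_sum[THEN conjunct1]) (auto intro: pd_mult[THEN conjunct2] ld)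
  also have "\<dots> = (\<Sum>j\<in>UNIV. pd i (pd j \<Phi>) x * pd j \<Phi> x + pd j \<Phi> x * pd i (pd j \<Phi>) x)"
    using pd_mult[OF ld ld] by simp
  finally show ?thesis .
qed

lemma smooth_family_inv_grad_sq: "smooth_family inv_grad_sq"
  unfolding smooth_family_def inv_grad_sq_def[abs_def]
proof (intro allI impI)
  fix \<Phi> :: "real^'n \<Rightarrow> real" assume "smooth_on UNIV \<Phi>"
  then show "smooth_on (regular_set \<Phi>) (\<lambda>x. inverse (grad_sq \<Phi> x))"
    by (intro smooth_on_inverse open_regular_set smooth_on_subset[OF smooth_on_grad_sq])
      (auto simp: regular_set_grad_sq)
qed

lemma pderivs_bounded_Nil_inv_grad_sq: "pderivs_bounded 1 2 2 ([]::'n::finite list) inv_grad_sq"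
proof (rule pderivs_boundedI[OF growth_fun_const[of 1]])
  show "pderivs_bounded_by (\<lambda>_. 1) 1 2 2 ([]::'n list) inv_grad_sq"
  proof (rule pderivs_bounded_byI)
    fix \<Phi> :: "real^'n \<Rightarrow> real" and V \<xi> assume "\<xi> \<in> regular_set \<Phi>"
    then have "norm (grad \<Phi> \<xi>) > 0" by (rule norm_grad_pos)
    then show "\<bar>pderivs [] (inv_grad_sq \<Phi>) \<xi>\<bar> \<le> 1 * inv_power_sum 2 (2 + int (length ([]::'n list))) (norm (grad \<Phi> \<xi>))"
      by (simp add: inv_power_sum_def inv_grad_sq_def flip: norm_grad_power2)
        (simp add: power_one_over inverse_eq_divide)
  qed
qed simp

text \<open>
  By the quotient rule, \<open>\<partial>\<^sub>i |\<nabla>\<Phi>|\<^sup>-\<^sup>2\<close> is a polynomial in \<open>|\<nabla>\<Phi>|\<^sup>-\<^sup>2\<close> and the first and second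
  derivatives of \<open>\<Phi>\<close>, so the bounds for it follow inductively from those for \<open>|\<nabla>\<Phi>|\<^sup>-\<^sup>2\<close> itself.
\<close>

lemma admissible_inv_grad_sq: "admissible n 1 2 2 (inv_grad_sq :: (real^'n::finite \<Rightarrow> real) \<Rightarrow> _)"
proof (induction n)
  case 0 thus ?case
    unfolding admissible_0_iff using smooth_family_inv_grad_sq pderivs_bounded_Nil_inv_grad_sq by blast
next
  case (Suc n)
  show ?case
  proof (rule admissible_SucI[OF smooth_family_inv_grad_sq pderivs_bounded_Nil_inv_grad_sq])
    fix i :: 'n
    have hess: "admissible n 2 0 0 (\<lambda>\<Phi>. pd i (pd j (\<Phi>::real^'n \<Rightarrow> real)))" for j
      using admissible_pderivs[of "[i, j]"] by (simp add: numeral_2_eq_2)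
    have "admissible n 2 (-1) (-1) (\<lambda>\<Phi> x. pd i (pd j \<Phi>) x * pd j (\<Phi>::real^'n \<Rightarrow> real) x
        + pd j \<Phi> x * pd i (pd j \<Phi>) x)" for j
      by (intro admissible_add admissible_mono[OF admissible_mult[OF hess admissible_grad_component]]
          admissible_mono[OF admissible_mult[OF admissible_grad_component hess]]) auto
    then have sum: "admissible n 2 (-1) (-1) (\<lambda>\<Phi> x. \<Sum>j\<in>UNIV. pd i (pd j \<Phi>) x * pd j \<Phi> x
        + pd j \<Phi> x * pd i (pd j (\<Phi>::real^'n \<Rightarrow> real)) x)"
      by (intro admissible_sum) auto
    have sq: "admissible n 1 4 4 (\<lambda>\<Phi> x. inv_grad_sq \<Phi> x * inv_grad_sq (\<Phi>::real^'n \<Rightarrow> real) x)"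
      by (rule admissible_mono[OF admissible_mult[OF Suc.IH Suc.IH]]) auto
    have "admissible n (1 + 1) 2 (2 + 1) (\<lambda>\<Phi> x. - ((\<Sum>j\<in>UNIV. pd i (pd j \<Phi>) x * pd j \<Phi> x
        + pd j \<Phi> x * pd i (pd j \<Phi>) x) * (inv_grad_sq \<Phi> x * inv_grad_sq (\<Phi>::real^'n \<Rightarrow> real) x)))"
      by (rule admissible_uminus, rule admissible_mono[OF admissible_mult[OF sum sq]]) auto
    then show "admissible n (1 + 1) 2 (2 + 1) (\<lambda>\<Phi>. pd i (inv_grad_sq \<Phi>))"
      by (rule admissible_cong) (simp add: pd_inv_grad_sq)
  qed
qed

lemma admissible_Acoef: "admissible n 1 1 1 (\<lambda>\<Phi> x. Acoef (\<Phi>::real^'n::finite \<Rightarrow> real) i x)"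
proof -
  have "admissible n 1 1 1 (\<lambda>\<Phi> x. pd i (\<Phi>::real^'n \<Rightarrow> real) x * inv_grad_sq \<Phi> x)"
    by (rule admissible_mono[OF admissible_mult[OF admissible_grad_component admissible_inv_grad_sq]]) auto
  thus ?thesis by (simp add: Acoef_def inv_grad_sq_def norm_grad_power2 divide_inverse)
qed

section \<open>The coefficients of the powers of the transposed operator\<close>

text \<open>
  \<open>tL_coeff N l \<Phi>\<close> is the coefficient of \<open>\<partial>\<^sup>l\<close>, for an ordered list \<open>l\<close> of directions, in the
  expansion of \<open>(\<^sup>t\<L>)\<^sup>N\<close>: applying \<open>\<^sup>t\<L>\<close> to \<open>c \<partial>\<^sup>l u\<close> gives
  \<open>- \<Sum>\<^sub>i \<partial>\<^sub>i(A\<^sub>i c) \<partial>\<^sup>l u - \<Sum>\<^sub>i A\<^sub>i c \<partial>\<^sub>i \<partial>\<^sup>l u\<close>.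
\<close>

fun tL_coeff :: "nat \<Rightarrow> 'n::finite list \<Rightarrow> (real^'n \<Rightarrow> real) \<Rightarrow> real^'n \<Rightarrow> real" where
  "tL_coeff 0 l \<Phi> x = (if l = [] then 1 else 0)"
| "tL_coeff (Suc N) l \<Phi> x = - (\<Sum>i\<in>UNIV. pd i (\<lambda>y. Acoef \<Phi> i y * tL_coeff N l \<Phi> y) x)
     - (case l of [] \<Rightarrow> 0 | j # l' \<Rightarrow> Acoef \<Phi> j x * tL_coeff N l' \<Phi> x)"

lemma tL_coeff_eq_0: "length l > N \<Longrightarrow> tL_coeff N l \<Phi> x = 0"
proof (induction N arbitrary: l x)
  case (Suc N)
  then have "(case l of [] \<Rightarrow> 0 | j # l' \<Rightarrow> Acoef \<Phi> j x * tL_coeff N l' \<Phi> x) = 0"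
    by (cases l) auto
  with Suc show ?case by (simp add: pd_const)
qed simp

lemma admissible_tL:
  fixes c :: "(real^'n::finite \<Rightarrow> real) \<Rightarrow> real^'n \<Rightarrow> real"
  assumes "admissible (Suc n) s a b c"
  shows "admissible n (max 1 s + 1) (a + 1) (b + 2) (\<lambda>\<Phi>. tL \<Phi> (c \<Phi>))"
proof -
  have "admissible n (max 1 s + 1) (1 + a) (1 + b + 1) (\<lambda>\<Phi>. pd i (\<lambda>y. Acoef \<Phi> i y * c \<Phi> y))" for i
    by (rule admissible_pd[OF admissible_mult[OF admissible_Acoef assms]])
  then have "admissible n (max 1 s + 1) (1 + a) (1 + b + 1)
      (\<lambda>\<Phi> x. - (\<Sum>i\<in>UNIV. pd i (\<lambda>y. Acoef \<Phi> i y * c \<Phi> y) x))"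
    by (intro admissible_uminus admissible_sum) auto
  then show ?thesis unfolding tL_def[abs_def] by (rule admissible_mono) auto
qed

lemma admissible_tL_coeff:
  "length l \<le> N \<Longrightarrow>
    admissible n (N - length l + 1) (int N) (2 * int N - int (length l)) (tL_coeff N (l::'n::finite list))"
proof (induction N arbitrary: n l)
  case 0
  then have "tL_coeff 0 l = (\<lambda>(\<Phi>::real^'n \<Rightarrow> real) x. 1)" by (intro ext) simp
  with 0 show ?case using admissible_one by simp
next
  case (Suc N)
  let ?s = "Suc N - length l + 1" and ?a = "int (Suc N)" and ?b = "2 * int (Suc N) - int (length l)"
  have eq: "tL_coeff (Suc N) l = (\<lambda>\<Phi> x. tL \<Phi> (tL_coeff N l \<Phi>) x
      + - (case l of [] \<Rightarrow> 0 | j # l' \<Rightarrow> Acoef \<Phi> j x * tL_coeff N l' \<Phi> x))"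
    by (intro ext) (simp add: tL_def)
  have tL_part: "admissible n ?s ?a ?b (\<lambda>\<Phi>. tL \<Phi> (tL_coeff N l \<Phi>))"
  proof (cases "length l \<le> N")
    case True
    show ?thesis by (rule admissible_mono[OF admissible_tL[OF Suc.IH[OF True]]]) (use True in auto)
  next
    case False
    then have "(\<lambda>\<Phi>. tL \<Phi> (tL_coeff N l \<Phi>)) = (\<lambda>\<Phi> x. 0)"
      by (intro ext) (simp add: tL_def tL_coeff_eq_0 pd_const)
    then show ?thesis using admissible_zero by simp
  qed
  have shift_part: "admissible n ?s ?a ?b
      (\<lambda>\<Phi> x. - (case l of [] \<Rightarrow> 0 | j # l' \<Rightarrow> Acoef \<Phi> j x * tL_coeff N l' \<Phi> x))"
  proof (cases l)
    case Nil
    then show ?thesis using admissible_zero by simp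
  next
    case (Cons j l')
    with Suc.prems have len: "length l' \<le> N" by simp
    have "admissible n ?s ?a ?b (\<lambda>\<Phi> x. Acoef \<Phi> j x * tL_coeff N l' \<Phi> x)"
      by (rule admissible_mono[OF admissible_mult[OF admissible_Acoef Suc.IH[OF len]]]) (use Cons len in auto)
    then show ?thesis using Cons by (simp add: admissible_uminus)
  qed
  show ?case unfolding eq by (rule admissible_add[OF tL_part shift_part])
qed

lemma smooth_on_Acoef_tL_coeff:
  assumes "smooth_on UNIV \<Phi>" "l \<in> lists_upto N"
  shows "smooth_on (regular_set \<Phi>) (\<lambda>y. Acoef \<Phi> i y * tL_coeff N l \<Phi> y)"
proof -
  have "length l \<le> N" using assms(2) by (simp add: lists_upto_def)
  from admissible_mult[OF admissible_Acoef[of 0 i] admissible_tL_coeff[OF this, of 0]]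
  have "smooth_family (\<lambda>\<Phi> y. Acoef \<Phi> i y * tL_coeff N l \<Phi> y)" by (rule admissible_smooth_family)
  then show ?thesis using assms(1) smooth_familyD by blast
qed

lemma tL_pderivs_sum:
  fixes \<Phi> u :: "real^'n::finite \<Rightarrow> real"
  assumes "smooth_on UNIV \<Phi>" "smooth_on UNIV u" "x \<in> regular_set \<Phi>" "finite L"
    and smooth: "\<And>l i. l \<in> L \<Longrightarrow> smooth_on (regular_set \<Phi>) (\<lambda>y. Acoef \<Phi> i y * c l y)"
    and w: "\<And>y. y \<in> regular_set \<Phi> \<Longrightarrow> w y = (\<Sum>l\<in>L. c l y * pderivs l u y)"
  shows "tL \<Phi> w x = (\<Sum>l\<in>L. - (\<Sum>i\<in>UNIV. pd i (\<lambda>y. Acoef \<Phi> i y * c l y) x) * pderivs l u x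
      - (\<Sum>i\<in>UNIV. Acoef \<Phi> i x * c l x * pderivs (i # l) u x))"
proof -
  have "pd i (\<lambda>y. Acoef \<Phi> i y * w y) x = (\<Sum>l\<in>L. pd i (\<lambda>y. Acoef \<Phi> i y * c l y) x * pderivs l u x
      + Acoef \<Phi> i x * c l x * pderivs (i # l) u x)" for i
  proof -
    have d1: "pd_differentiable (\<lambda>y. Acoef \<Phi> i y * c l y) x i" if "l \<in> L" for l
      using smooth_on_pd_differentiable[OF smooth[OF that] assms(3)] .
    have d2: "pd_differentiable (pderivs l u) x i" for l
      using smooth_on_pd_differentiable[OF smooth_on_pderivs[OF assms(2)]] by simp
    have "pd i (\<lambda>y. Acoef \<Phi> i y * w y) x = pd i (\<lambda>y. \<Sum>l\<in>L. (Acoef \<Phi> i y * c l y) * pderivs l u y) x"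
      by (rule pd_cong_open[OF open_regular_set[OF assms(1)] assms(3)]) (simp add: w sum_distrib_left ac_simps)
    also have "\<dots> = (\<Sum>l\<in>L. pd i (\<lambda>y. (Acoef \<Phi> i y * c l y) * pderivs l u y) x)"
      using pd_mult[OF d1 d2] by (intro pd_sum[THEN conjunct1, OF assms(4)]) blast
    also have "\<dots> = (\<Sum>l\<in>L. pd i (\<lambda>y. Acoef \<Phi> i y * c l y) x * pderivs l u x
        + Acoef \<Phi> i x * c l x * pderivs (i # l) u x)"
      using pd_mult[OF d1 d2] by (intro sum.cong) simp_all
    finally show ?thesis .
  qed
  then have "tL \<Phi> w x = - (\<Sum>i\<in>UNIV. \<Sum>l\<in>L. pd i (\<lambda>y. Acoef \<Phi> i y * c l y) x * pderivs l u x)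
      - (\<Sum>i\<in>UNIV. \<Sum>l\<in>L. Acoef \<Phi> i x * c l x * pderivs (i # l) u x)"
    by (simp add: tL_def sum.distrib)
  also have "\<dots> = (\<Sum>l\<in>L. - (\<Sum>i\<in>UNIV. pd i (\<lambda>y. Acoef \<Phi> i y * c l y) x) * pderivs l u x
      - (\<Sum>i\<in>UNIV. Acoef \<Phi> i x * c l x * pderivs (i # l) u x))"
    by (subst (1 2) sum.swap) (simp add: sum_subtractf sum_negf sum_distrib_right)
  finally show ?thesis .
qed

lemma lists_upto_0: "lists_upto 0 = {[]}"
  unfolding lists_upto_def by auto

lemma lists_upto_Suc: "lists_upto (Suc N) = insert [] ((\<lambda>(j, l). j # l) ` (UNIV \<times> lists_upto N))"
proof -
  have "m = [] \<or> (\<exists>j l. m = j # l \<and> length l \<le> N)" if "length m \<le> Suc N" for m :: "'a list"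
    using that by (cases m) auto
  then show ?thesis unfolding lists_upto_def by (auto simp: image_iff)
qed

lemma sum_lists_upto_Suc_tL_coeff:
  "(\<Sum>m\<in>lists_upto (Suc N). tL_coeff (Suc N) m \<Phi> x * D m)
    = (\<Sum>l\<in>lists_upto N. - (\<Sum>i\<in>UNIV. pd i (\<lambda>y. Acoef \<Phi> i y * tL_coeff N l \<Phi> y) x) * D l
        - (\<Sum>i\<in>UNIV. Acoef \<Phi> i x * tL_coeff N l \<Phi> x * D (i # l)))"
proof -
  define P where "P m = (\<Sum>i\<in>UNIV. pd i (\<lambda>y. Acoef \<Phi> i y * tL_coeff N m \<Phi> y) x)" for m
  define Q where "Q m = (case m of [] \<Rightarrow> 0 | j # l \<Rightarrow> Acoef \<Phi> j x * tL_coeff N l \<Phi> x)" for m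
  have "(\<Sum>m\<in>lists_upto (Suc N). P m * D m) = (\<Sum>l\<in>lists_upto N. P l * D l)"
    by (rule sum.mono_neutral_right[OF finite_lists_upto])
      (auto simp: lists_upto_def P_def tL_coeff_eq_0 pd_const)
  moreover have "(\<Sum>m\<in>lists_upto (Suc N). Q m * D m)
      = (\<Sum>l\<in>lists_upto N. \<Sum>i\<in>UNIV. Acoef \<Phi> i x * tL_coeff N l \<Phi> x * D (i # l))"
  proof -
    have "(\<Sum>m\<in>lists_upto (Suc N). Q m * D m) = (\<Sum>m\<in>(\<lambda>(j, l). j # l) ` (UNIV \<times> lists_upto N). Q m * D m)"
      unfolding lists_upto_Suc by (subst sum.insert) (auto simp: Q_def finite_lists_upto)
    also have "\<dots> = (\<Sum>(i, l)\<in>UNIV \<times> lists_upto N. Acoef \<Phi> i x * tL_coeff N l \<Phi> x * D (i # l))"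
      by (subst sum.reindex) (auto simp: inj_on_def Q_def intro!: sum.cong)
    also have "\<dots> = (\<Sum>l\<in>lists_upto N. \<Sum>i\<in>UNIV. Acoef \<Phi> i x * tL_coeff N l \<Phi> x * D (i # l))"
      by (subst sum.cartesian_product[symmetric]) (rule sum.swap)
    finally show ?thesis .
  qed
  ultimately show ?thesis
    by (simp add: P_def Q_def algebra_simps sum_subtractf sum_negf sum.distrib)
qed

lemma tL_power_eq_pderivs_sum:
  fixes \<Phi> :: "real^'n::finite \<Rightarrow> real"
  assumes "smooth_on UNIV \<Phi>" "smooth_on UNIV u" "x \<in> regular_set \<Phi>"
  shows "(tL \<Phi> ^^ N) u x = (\<Sum>l\<in>lists_upto N. tL_coeff N l \<Phi> x * pderivs l u x)"
  using assms(3)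
proof (induction N arbitrary: x)
  case 0 thus ?case by (simp add: lists_upto_0)
next
  case (Suc N)
  have "(tL \<Phi> ^^ Suc N) u x = tL \<Phi> ((tL \<Phi> ^^ N) u) x" by simp
  also have "\<dots> = (\<Sum>l\<in>lists_upto N. - (\<Sum>i\<in>UNIV. pd i (\<lambda>y. Acoef \<Phi> i y * tL_coeff N l \<Phi> y) x) * pderivs l u x
      - (\<Sum>i\<in>UNIV. Acoef \<Phi> i x * tL_coeff N l \<Phi> x * pderivs (i # l) u x))"
    by (rule tL_pderivs_sum[OF assms(1,2) Suc.prems finite_lists_upto smooth_on_Acoef_tL_coeff[OF assms(1)] Suc.IH])
  also have "\<dots> = (\<Sum>m\<in>lists_upto (Suc N). tL_coeff (Suc N) m \<Phi> x * pderivs m u x)"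
    by (rule sum_lists_upto_Suc_tL_coeff[symmetric])
  finally show ?case .
qed

text \<open>Since mixed partial derivatives commute, \<open>\<partial>\<^sup>l\<close> only depends on the multi-index of \<open>l\<close>.\<close>

definition tL_midx_coeff :: "nat \<Rightarrow> (real^'n::finite \<Rightarrow> real) \<Rightarrow> ('n \<Rightarrow> nat) \<Rightarrow> real^'n \<Rightarrow> real" where
  "tL_midx_coeff N \<Phi> \<alpha> x = (\<Sum>l\<in>{l\<in>lists_upto N. list_midx l = \<alpha>}. tL_coeff N l \<Phi> x)"

lemma admissible_tL_midx_coeff:
  assumes "mlen \<alpha> \<le> N"
  shows "admissible n (N - mlen \<alpha> + 1) (int N) (2 * int N - int (mlen \<alpha>))
    (\<lambda>\<Phi>. tL_midx_coeff N \<Phi> (\<alpha>::'n::finite \<Rightarrow> nat))"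
  unfolding tL_midx_coeff_def[abs_def]
proof (rule admissible_sum)
  show "finite {l \<in> lists_upto N. list_midx l = \<alpha>}" by (rule finite_subset[OF _ finite_lists_upto]) auto
  fix l :: "'n list" assume "l \<in> {l \<in> lists_upto N. list_midx l = \<alpha>}"
  then have "length l \<le> N" "length l = mlen \<alpha>" by (auto simp: lists_upto_def mlen_list_midx[symmetric])
  then show "admissible n (N - mlen \<alpha> + 1) (int N) (2 * int N - int (mlen \<alpha>)) (tL_coeff N l)"
    using admissible_tL_coeff by metis
qed

lemma tL_power_eq_dpart_sum:
  fixes \<Phi> :: "real^'n::finite \<Rightarrow> real"
  assumes "smooth_on UNIV \<Phi>" "smooth_on UNIV u" "x \<in> regular_set \<Phi>"
  shows "(tL \<Phi> ^^ N) u x = (\<Sum>\<alpha>\<in>{\<alpha>. mlen \<alpha> \<le> N}. tL_midx_coeff N \<Phi> \<alpha> x * dpart \<alpha> u x)"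
proof -
  have "(tL \<Phi> ^^ N) u x = (\<Sum>l\<in>lists_upto N. tL_coeff N l \<Phi> x * dpart (list_midx l) u x)"
    unfolding tL_power_eq_pderivs_sum[OF assms] using pderivs_eq_dpart[OF open_UNIV assms(2)] by simp
  also have "\<dots> = (\<Sum>\<alpha>\<in>{\<alpha>. mlen \<alpha> \<le> N}. \<Sum>l\<in>{l \<in> lists_upto N. list_midx l = \<alpha>}.
      tL_coeff N l \<Phi> x * dpart (list_midx l) u x)"
    by (rule sum.group[symmetric, OF finite_lists_upto finite_midx_le])
      (auto simp: lists_upto_def mlen_list_midx)
  also have "\<dots> = (\<Sum>\<alpha>\<in>{\<alpha>. mlen \<alpha> \<le> N}. tL_midx_coeff N \<Phi> \<alpha> x * dpart \<alpha> u x)"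
    unfolding tL_midx_coeff_def sum_distrib_right by (intro sum.cong) auto
  finally show ?thesis .
qed

lemma dpart_tL_midx_coeff_bound:
  assumes "mlen \<alpha> \<le> N"
  obtains F where "growth_fun F"
    "\<And>\<Phi> V \<xi>. smooth_on UNIV \<Phi> \<Longrightarrow> MM_finite \<Phi> V (N - mlen \<alpha> + mlen \<beta> + 1) \<Longrightarrow> \<xi> \<in> V \<Longrightarrow>
      grad \<Phi> \<xi> \<noteq> 0 \<Longrightarrow>
      \<bar>dpart \<beta> (tL_midx_coeff N \<Phi> (\<alpha>::'n::finite \<Rightarrow> nat)) \<xi>\<bar>
        \<le> F (MM \<Phi> V (N - mlen \<alpha> + mlen \<beta> + 1)) * (\<Sum>k = N..2 * N - mlen \<alpha> + mlen \<beta>. 1 / norm (grad \<Phi> \<xi>) ^ k)"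
proof -
  have "pderivs_bounded (N - mlen \<alpha> + 1) (int N) (2 * int N - int (mlen \<alpha>)) (midx_list \<beta>)
      (\<lambda>\<Phi>. tL_midx_coeff N \<Phi> \<alpha>)"
    by (rule admissible_pderivs_bounded[OF admissible_tL_midx_coeff[OF assms, of "mlen \<beta>"]])
      (simp add: length_midx_list)
  then obtain F where F: "growth_fun F" and bound: "pderivs_bounded_by F (N - mlen \<alpha> + 1) (int N)
      (2 * int N - int (mlen \<alpha>)) (midx_list \<beta>) (\<lambda>\<Phi>. tL_midx_coeff N \<Phi> \<alpha>)"
    by (rule pderivs_boundedE)
  have exponent: "2 * int N - int (mlen \<alpha>) + int (mlen \<beta>) = int (2 * N - mlen \<alpha> + mlen \<beta>)"
    using assms by (simp add: of_nat_diff)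
  have "\<bar>dpart \<beta> (tL_midx_coeff N \<Phi> \<alpha>) \<xi>\<bar>
      \<le> F (MM \<Phi> V (N - mlen \<alpha> + mlen \<beta> + 1)) * (\<Sum>k = N..2 * N - mlen \<alpha> + mlen \<beta>. 1 / norm (grad \<Phi> \<xi>) ^ k)"
    if "smooth_on UNIV \<Phi>" "MM_finite \<Phi> V (N - mlen \<alpha> + mlen \<beta> + 1)" "\<xi> \<in> V" "grad \<Phi> \<xi> \<noteq> 0" for \<Phi> V \<xi>
  proof -
    have "\<bar>dpart \<beta> (tL_midx_coeff N \<Phi> \<alpha>) \<xi>\<bar> \<le> F (MM \<Phi> V (N - mlen \<alpha> + 1 + length (midx_list \<beta>)))
        * inv_power_sum (int N) (2 * int N - int (mlen \<alpha>) + int (length (midx_list \<beta>))) (norm (grad \<Phi> \<xi>))"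
      unfolding dpart_def using that
      by (intro pderivs_bounded_byD[OF bound]) (simp_all add: length_midx_list regular_set_def)
    also have "\<dots> = F (MM \<Phi> V (N - mlen \<alpha> + mlen \<beta> + 1))
        * inv_power_sum (int N) (int (2 * N - mlen \<alpha> + mlen \<beta>)) (norm (grad \<Phi> \<xi>))"
      unfolding length_midx_list exponent by (simp only: ac_simps)
    also have "\<dots> = F (MM \<Phi> V (N - mlen \<alpha> + mlen \<beta> + 1)) * (\<Sum>k = N..2 * N - mlen \<alpha> + mlen \<beta>. 1 / norm (grad \<Phi> \<xi>) ^ k)"
      using inv_power_sum_nat[of "norm (grad \<Phi> \<xi>)" N "2 * N - mlen \<alpha> + mlen \<beta>"] that(4) by simp
    finally show ?thesis .
  qed
  with F show ?thesis using that by blast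
qed

theorem lemma4:
  fixes N :: nat
  shows "\<exists>c :: (real^'n::finite \<Rightarrow> real) \<Rightarrow> ('n \<Rightarrow> nat) \<Rightarrow> real^'n \<Rightarrow> real.
    (\<forall>\<Phi>. smooth_on UNIV \<Phi> \<longrightarrow>
       (\<forall>\<alpha>. mlen \<alpha> \<le> N \<longrightarrow> smooth_on {x. grad \<Phi> x \<noteq> 0} (c \<Phi> \<alpha>)) \<and>
       (\<forall>u. smooth_on UNIV u \<longrightarrow>
          (\<forall>x. grad \<Phi> x \<noteq> 0 \<longrightarrow>
             (tL \<Phi> ^^ N) u x = (\<Sum>\<alpha>\<in>{\<alpha>. mlen \<alpha> \<le> N}. c \<Phi> \<alpha> x * dpart \<alpha> u x)))) \<and>
    (\<forall>\<alpha> \<beta>. mlen \<alpha> \<le> N \<longrightarrow>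
       (\<exists>F :: real \<Rightarrow> real. mono_on {0..} F \<and> (\<forall>t\<ge>0. F t \<ge> 0) \<and>
          (\<forall>\<Phi> V. smooth_on UNIV \<Phi> \<longrightarrow> open V \<longrightarrow>
             MM_finite \<Phi> V (N - mlen \<alpha> + mlen \<beta> + 1) \<longrightarrow>
             (\<forall>\<xi>\<in>V. grad \<Phi> \<xi> \<noteq> 0 \<longrightarrow>
                \<bar>dpart \<beta> (c \<Phi> \<alpha>) \<xi>\<bar> \<le>
                  F (MM \<Phi> V (N - mlen \<alpha> + mlen \<beta> + 1)) *
                  (\<Sum>k = N..2 * N - mlen \<alpha> + mlen \<beta>. 1 / norm (grad \<Phi> \<xi>) ^ k)))))"
proof (intro exI[of _ "tL_midx_coeff N"] conjI allI impI)
  fix \<Phi> :: "real^'n \<Rightarrow> real" and \<alpha> :: "'n \<Rightarrow> nat"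
  assume "smooth_on UNIV \<Phi>" "mlen \<alpha> \<le> N"
  then show "smooth_on {x. grad \<Phi> x \<noteq> 0} (tL_midx_coeff N \<Phi> \<alpha>)"
    using admissible_smooth_family[OF admissible_tL_midx_coeff] smooth_familyD
    unfolding regular_set_def by blast
next
  fix \<Phi> u :: "real^'n \<Rightarrow> real" and x
  assume "smooth_on UNIV \<Phi>" "smooth_on UNIV u" "grad \<Phi> x \<noteq> 0"
  then show "(tL \<Phi> ^^ N) u x = (\<Sum>\<alpha>\<in>{\<alpha>. mlen \<alpha> \<le> N}. tL_midx_coeff N \<Phi> \<alpha> x * dpart \<alpha> u x)"
    by (intro tL_power_eq_dpart_sum) (simp_all add: regular_set_def)
next
  fix \<alpha> \<beta> :: "'n \<Rightarrow> nat"
  assume "mlen \<alpha> \<le> N"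
  then obtain F where F: "growth_fun F" and bound: "\<And>\<Phi> V \<xi>. smooth_on UNIV \<Phi> \<Longrightarrow>
      MM_finite \<Phi> V (N - mlen \<alpha> + mlen \<beta> + 1) \<Longrightarrow> \<xi> \<in> V \<Longrightarrow> grad \<Phi> \<xi> \<noteq> 0 \<Longrightarrow>
      \<bar>dpart \<beta> (tL_midx_coeff N \<Phi> \<alpha>) \<xi>\<bar>
        \<le> F (MM \<Phi> V (N - mlen \<alpha> + mlen \<beta> + 1)) * (\<Sum>k = N..2 * N - mlen \<alpha> + mlen \<beta>. 1 / norm (grad \<Phi> \<xi>) ^ k)"
    using dpart_tL_midx_coeff_bound[where \<beta> = \<beta>] by blast
  then show "\<exists>F. mono_on {0..} F \<and> (\<forall>t\<ge>0. 0 \<le> F t) \<and>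
      (\<forall>\<Phi> V. smooth_on UNIV \<Phi> \<longrightarrow> open V \<longrightarrow> MM_finite \<Phi> V (N - mlen \<alpha> + mlen \<beta> + 1) \<longrightarrow>
        (\<forall>\<xi>\<in>V. grad \<Phi> \<xi> \<noteq> 0 \<longrightarrow> \<bar>dpart \<beta> (tL_midx_coeff N \<Phi> \<alpha>) \<xi>\<bar>
          \<le> F (MM \<Phi> V (N - mlen \<alpha> + mlen \<beta> + 1)) * (\<Sum>k = N..2 * N - mlen \<alpha> + mlen \<beta>. 1 / norm (grad \<Phi> \<xi>) ^ k)))"
    using F bound unfolding growth_fun_def by blast
qed

end
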